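(* Let $M=\langle W,W^\bot,\preceq,R,V\rangle$ be a $\mathsf{CK}$-model, $w\in W$, and $\varphi$ a well-named $\mu$-sentence. Then (1) $\mathsf I$ has a winning strategy for $\mathcal G(M,w\models\varphi)$ if and only if $M,w\models\varphi$; and (2) $\mathsf{II}$ has a winning strategy for $\mathcal G(M,w\models\varphi)$ if and only if $M,w\not\models\varphi$.
   Context: Syntax. Fix disjoint sets $\mathrm{Prop}$ (propositions) and $\mathrm{Var}$ (propositional variables). $\mu$-formulas are given by $\varphi::=P\mid X\mid\bot\mid\varphi\land\varphi\mid\varphi\lor\varphi\mid\varphi\to\varphi\mid\Box\varphi\mid\Diamond\varphi\mid\mu X.\varphi\mid\nu X.\varphi$ with $P\in\mathrm{Prop}$, $X\in\mathrm{Var}$, where $\mu X.\varphi$ and $\nu X.\varphi$ may only be formed when $X$ is positive in $\varphi$. Positivity/negativity is defined inductively: $X$ is both positive and negative in $P$, in $\bot$, and in any variable $Y\neq X$; $X$ is positive in $X$; if $X$ is positive (resp. negative) in $\varphi$ and $\psi$, then it is positive (resp. negative) in $\varphi\land\psi$, $\varphi\lor\psi$, $\Box\varphi$, $\Diamond\varphi$; if $X$ is negative (resp. positive) in $\varphi$ and positive (resp. negative) in $\psi$, then $X$ is positive (resp. negative) in $\varphi\to\psi$; $X$ is both positive and negative in $\mu X.\varphi$ and $\nu X.\varphi$. $\eta$ ranges over $\{\mu,\nu\}$. A sentence has no free variables. $\mathrm{Sub}(\varphi)$ is the set of subformulas. $\varphi$ is guarded if for every subformula $\eta X.\psi$, every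 occurrence of $X$ in $\psi$ is in the scope of $\Box$ or $\Diamond$; well-bounded if each variable occurring bound in $\varphi$ is bound by exactly one fixed-point operator $\eta X$ in $\varphi$; well-named if guarded and well-bounded. For well-named $\varphi$ and a subformula $\eta X.\psi$, write $\psi_X:=\psi$. Models. A $\mathsf{CK}$-model is $M=\langle W,W^\bot,\preceq,R,V\rangle$ with $W\neq\emptyset$, $W^\bot\subseteq W$ (fallible worlds), $\preceq$ a reflexive transitive relation on $W$, $R$ a binary relation on $W$, and $V:\mathrm{Prop}\to\mathcal P(W)$, such that: $w\preceq v$ and $w\in V(P)$ imply $v\in V(P)$; $W^\bot\subseteq V(P)$ for all $P$; and $W^\bot$ is closed under $\preceq$ and $R$. $M[X\mapsto A]$ denotes $M$ with $V(X):=A$. Semantics. $w\preceq;R\,u$ means there is $v$ with $w\preceq v$ and $vRu$. $\|P\|=V(P)$; $\|\bot\|=W^\bot$; $\|\varphi\land\psi\|=\|\varphi\|\cap\|\psi\|$; $\|\varphi\lor\psi\|=\|\varphi\|\cup\|\psi\|$; $\|\varphi\to\psi\|=\{w\mid\forall v\,(w\preceq v\wedge v\in\|\varphi\|\Rightarrow v\in\|\psi\|)\}$; $\|\Box\varphi\|=\{w\mid\forall u\,(w\preceq;R\,u\Rightarrow u\in\|\varphi\|)\}$; $\|\Diamond\varphi\|=\{w\mid\forall v\,(w\preceq v\Rightarrow\exists u\,(vRu\wedge u\in\|\varphi\|))\}$; $\|\mu X.\varphi\|$, $\|\nu X.\varphi\|$ are the least and greatest fixed points of $A\mapsto\|\varphi\|^{M[X\mapsto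 A]}$. $M,w\models\varphi$ means $w\in\|\varphi\|^M$. Evaluation game $\mathcal G(M,w\models\varphi)$. Two players $\mathsf I,\mathsf{II}$ hold the two roles Verifier ($\mathsf V$) and Refuter ($\mathsf R$), always different; $\bar{\mathsf Q}$ is the role dual to $\mathsf Q$. Positions are $\langle v,\psi,\mathsf Q\rangle$ with $v\in W$, $\psi\in\mathrm{Sub}(\varphi)$, plus auxiliary positions $\langle v,\hat\Diamond\psi,\mathsf Q\rangle$ for $\Diamond\psi\in\mathrm{Sub}(\varphi)$ and $\langle v,\psi?\theta,\mathsf Q\rangle$ for $\psi\to\theta\in\mathrm{Sub}(\varphi)$; $\mathsf Q$ is the current role of $\mathsf I$ ($\mathsf{II}$ has $\bar{\mathsf Q}$). Initial position $\langle w,\varphi,\mathsf V\rangle$. Each position is owned by the player holding the indicated role, who picks the next position from the listed set: Owned by the Verifier role: $\langle v,P,\mathsf Q\rangle$ with $v\notin V(P)$: no moves; $\langle v,\bot,\mathsf Q\rangle$ with $v\notin W^\bot$: no moves; $\langle v,\psi\lor\theta,\mathsf Q\rangle\to\{\langle v,\psi,\mathsf Q\rangle,\langle v,\theta,\mathsf Q\rangle\}$; $\langle v,\psi?\theta,\mathsf Q\rangle\to\{\langle v,\psi,\bar{\mathsf Q}\rangle,\langle v,\theta,\mathsf Q\rangle\}$; $\langle v,\hat\Diamond\psi,\mathsf Q\rangle\to\{\langle u,\psi,\mathsf Q\rangle\mid vRu\}$; $\langle v,\mu X.\psi_X,\mathsf Q\rangle\to\{\langle v,\psi_X,\mathsf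 Q\rangle\}$; $\langle v,X,\mathsf Q\rangle\to\{\langle v,\mu X.\psi_X,\mathsf Q\rangle\}$ when $X$ is bound by $\mu$. Owned by the Refuter role: $\langle v,P,\mathsf Q\rangle$ with $v\in V(P)$: no moves; $\langle v,\bot,\mathsf Q\rangle$ with $v\in W^\bot$: no moves; $\langle v,\psi\land\theta,\mathsf Q\rangle\to\{\langle v,\psi,\mathsf Q\rangle,\langle v,\theta,\mathsf Q\rangle\}$; $\langle v,\psi\to\theta,\mathsf Q\rangle\to\{\langle u,\psi?\theta,\mathsf Q\rangle\mid v\preceq u\}$; $\langle v,\Box\psi,\mathsf Q\rangle\to\{\langle u,\psi,\mathsf Q\rangle\mid v\preceq;R\,u\}$; $\langle v,\Diamond\psi,\mathsf Q\rangle\to\{\langle u,\hat\Diamond\psi,\mathsf Q\rangle\mid v\preceq u\}$; $\langle v,\nu X.\psi_X,\mathsf Q\rangle\to\{\langle v,\psi_X,\mathsf Q\rangle\}$; $\langle v,X,\mathsf Q\rangle\to\{\langle v,\nu X.\psi_X,\mathsf Q\rangle\}$ when $X$ is bound by $\nu$. A run is a maximal (finite or infinite) sequence of positions starting at the initial position, each obtained by a legal move. The move from $\langle v,X,\mathsf Q\rangle$ to $\langle v,\eta X.\psi_X,\mathsf Q\rangle$ regenerates $\eta X.\psi_X$. A fixed-point subformula $\eta X.\psi_X$ is owned by $\mathsf I$ if some position $\langle v,\eta X.\psi_X,\mathsf Q\rangle$ is reachable and either ($\mathsf Q=\mathsf V$ and $\eta=\nu$) or ($\mathsf Q=\mathsf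 R$ and $\eta=\mu$); otherwise it is owned by $\mathsf{II}$. Winning: in a finite run, the owner of the last position (who has no move) loses. In an infinite run, let $\eta X.\psi_X$ be the outermost fixed-point formula regenerated infinitely often (every other infinitely often regenerated fixed-point formula is a subformula of it); $\mathsf I$ wins iff $\mathsf I$ owns $\eta X.\psi_X$, otherwise $\mathsf{II}$ wins. A (positional) strategy for a player maps each position owned by that player having at least one move to one of its legal moves; it is winning if the player wins every run in which they follow it. *)

theory Defs
  imports Main
begin

datatype ('p, 'v) fm =
    Prop 'p
  | Var 'v
  | Bot
  | And "('p, 'v) fm" "('p, 'v) fm"
  | Or "('p, 'v) fm" "('p, 'v) fm"
  | Imp "('p, 'v) fm" "('p, 'v) fm"
  | Box "('p, 'v) fm"
  | Dia "('p, 'v) fm"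
  | Mu 'v "('p, 'v) fm"
  | Nu 'v "('p, 'v) fm"

text \<open>polar X True phi: X is positive in phi; polar X False phi: X is negative in phi.\<close>
fun polar :: "'v \<Rightarrow> bool \<Rightarrow> ('p, 'v) fm \<Rightarrow> bool" where
  "polar X b (Prop P) = True"
| "polar X b Bot = True"
| "polar X b (Var Y) = (if Y = X then b else True)"
| "polar X b (And f g) = (polar X b f \<and> polar X b g)"
| "polar X b (Or f g) = (polar X b f \<and> polar X b g)"
| "polar X b (Imp f g) = (polar X (\<not> b) f \<and> polar X b g)"
| "polar X b (Box f) = polar X b f"
| "polar X b (Dia f) = polar X b f"
| "polar X b (Mu Y f) = (if Y = X then True else polar X b f)"
| "polar X b (Nu Y f) = (if Y = X then True else polar X b f)"

abbreviation positive :: "'v \<Rightarrow> ('p, 'v) fm \<Rightarrow> bool" where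
  "positive X f \<equiv> polar X True f"

fun mu_formula :: "('p, 'v) fm \<Rightarrow> bool" where
  "mu_formula (Prop P) = True"
| "mu_formula Bot = True"
| "mu_formula (Var Y) = True"
| "mu_formula (And f g) = (mu_formula f \<and> mu_formula g)"
| "mu_formula (Or f g) = (mu_formula f \<and> mu_formula g)"
| "mu_formula (Imp f g) = (mu_formula f \<and> mu_formula g)"
| "mu_formula (Box f) = mu_formula f"
| "mu_formula (Dia f) = mu_formula f"
| "mu_formula (Mu X f) = (positive X f \<and> mu_formula f)"
| "mu_formula (Nu X f) = (positive X f \<and> mu_formula f)"

fun free_vars :: "('p, 'v) fm \<Rightarrow> 'v set" where
  "free_vars (Prop P) = {}"
| "free_vars Bot = {}"
| "free_vars (Var Y) = {Y}"
| "free_vars (And f g) = free_vars f \<union> free_vars g"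
| "free_vars (Or f g) = free_vars f \<union> free_vars g"
| "free_vars (Imp f g) = free_vars f \<union> free_vars g"
| "free_vars (Box f) = free_vars f"
| "free_vars (Dia f) = free_vars f"
| "free_vars (Mu X f) = free_vars f - {X}"
| "free_vars (Nu X f) = free_vars f - {X}"

definition sentence :: "('p, 'v) fm \<Rightarrow> bool" where
  "sentence f \<longleftrightarrow> free_vars f = {}"

fun Sub :: "('p, 'v) fm \<Rightarrow> ('p, 'v) fm set" where
  "Sub (Prop P) = {Prop P}"
| "Sub Bot = {Bot}"
| "Sub (Var Y) = {Var Y}"
| "Sub (And f g) = insert (And f g) (Sub f \<union> Sub g)"
| "Sub (Or f g) = insert (Or f g) (Sub f \<union> Sub g)"
| "Sub (Imp f g) = insert (Imp f g) (Sub f \<union> Sub g)"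
| "Sub (Box f) = insert (Box f) (Sub f)"
| "Sub (Dia f) = insert (Dia f) (Sub f)"
| "Sub (Mu X f) = insert (Mu X f) (Sub f)"
| "Sub (Nu X f) = insert (Nu X f) (Sub f)"

fun guarded_in :: "'v \<Rightarrow> ('p, 'v) fm \<Rightarrow> bool" where
  "guarded_in X (Prop P) = True"
| "guarded_in X Bot = True"
| "guarded_in X (Var Y) = (Y \<noteq> X)"
| "guarded_in X (And f g) = (guarded_in X f \<and> guarded_in X g)"
| "guarded_in X (Or f g) = (guarded_in X f \<and> guarded_in X g)"
| "guarded_in X (Imp f g) = (guarded_in X f \<and> guarded_in X g)"
| "guarded_in X (Box f) = True"
| "guarded_in X (Dia f) = True"
| "guarded_in X (Mu Y f) = guarded_in X f"
| "guarded_in X (Nu Y f) = guarded_in X f"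

definition guarded :: "('p, 'v) fm \<Rightarrow> bool" where
  "guarded f \<longleftrightarrow> (\<forall>X g. (Mu X g \<in> Sub f \<or> Nu X g \<in> Sub f) \<longrightarrow> guarded_in X g)"

fun occurs :: "'v \<Rightarrow> ('p, 'v) fm \<Rightarrow> bool" where
  "occurs X (Prop P) = False"
| "occurs X Bot = False"
| "occurs X (Var Y) = (Y = X)"
| "occurs X (And f g) = (occurs X f \<or> occurs X g)"
| "occurs X (Or f g) = (occurs X f \<or> occurs X g)"
| "occurs X (Imp f g) = (occurs X f \<or> occurs X g)"
| "occurs X (Box f) = occurs X f"
| "occurs X (Dia f) = occurs X f"
| "occurs X (Mu Y f) = occurs X f"
| "occurs X (Nu Y f) = occurs X f"

fun occurs_bound :: "'v \<Rightarrow> ('p, 'v) fm \<Rightarrow> bool" where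
  "occurs_bound X (Prop P) = False"
| "occurs_bound X Bot = False"
| "occurs_bound X (Var Y) = False"
| "occurs_bound X (And f g) = (occurs_bound X f \<or> occurs_bound X g)"
| "occurs_bound X (Or f g) = (occurs_bound X f \<or> occurs_bound X g)"
| "occurs_bound X (Imp f g) = (occurs_bound X f \<or> occurs_bound X g)"
| "occurs_bound X (Box f) = occurs_bound X f"
| "occurs_bound X (Dia f) = occurs_bound X f"
| "occurs_bound X (Mu Y f) = ((Y = X \<and> occurs X f) \<or> occurs_bound X f)"
| "occurs_bound X (Nu Y f) = ((Y = X \<and> occurs X f) \<or> occurs_bound X f)"

fun binder_count :: "'v \<Rightarrow> ('p, 'v) fm \<Rightarrow> nat" where
  "binder_count X (Prop P) = 0"
| "binder_count X Bot = 0"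
| "binder_count X (Var Y) = 0"
| "binder_count X (And f g) = binder_count X f + binder_count X g"
| "binder_count X (Or f g) = binder_count X f + binder_count X g"
| "binder_count X (Imp f g) = binder_count X f + binder_count X g"
| "binder_count X (Box f) = binder_count X f"
| "binder_count X (Dia f) = binder_count X f"
| "binder_count X (Mu Y f) = (if Y = X then 1 else 0) + binder_count X f"
| "binder_count X (Nu Y f) = (if Y = X then 1 else 0) + binder_count X f"

definition well_bounded :: "('p, 'v) fm \<Rightarrow> bool" where
  "well_bounded f \<longleftrightarrow> (\<forall>X. occurs_bound X f \<longrightarrow> binder_count X f = 1)"

definition well_named :: "('p, 'v) fm \<Rightarrow> bool" where
  "well_named f \<longleftrightarrow> guarded f \<and> well_bounded f"

record ('w, 'p) ck_struct =
  mW :: "'w set"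
  mWb :: "'w set"
  mLe :: "('w \<times> 'w) set"
  mR :: "('w \<times> 'w) set"
  mV :: "'p \<Rightarrow> 'w set"

definition ck_model :: "('w, 'p, 'x) ck_struct_scheme \<Rightarrow> bool" where
  "ck_model M \<longleftrightarrow>
     mW M \<noteq> {} \<and> mWb M \<subseteq> mW M \<and>
     mLe M \<subseteq> mW M \<times> mW M \<and> refl_on (mW M) (mLe M) \<and> trans (mLe M) \<and>
     mR M \<subseteq> mW M \<times> mW M \<and>
     (\<forall>P. mV M P \<subseteq> mW M) \<and>
     (\<forall>P w v. (w, v) \<in> mLe M \<and> w \<in> mV M P \<longrightarrow> v \<in> mV M P) \<and>
     (\<forall>P. mWb M \<subseteq> mV M P) \<and>
     (\<forall>w v. w \<in> mWb M \<and> (w, v) \<in> mLe M \<longrightarrow> v \<in> mWb M) \<and>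
     (\<forall>w v. w \<in> mWb M \<and> (w, v) \<in> mR M \<longrightarrow> v \<in> mWb M)"

definition lfp_on :: "'w set \<Rightarrow> ('w set \<Rightarrow> 'w set) \<Rightarrow> 'w set" where
  "lfp_on W F = \<Inter> {A. A \<subseteq> W \<and> F A \<subseteq> A}"

definition gfp_on :: "'w set \<Rightarrow> ('w set \<Rightarrow> 'w set) \<Rightarrow> 'w set" where
  "gfp_on W F = \<Union> {A. A \<subseteq> W \<and> A \<subseteq> F A}"

fun sem :: "('w, 'p, 'x) ck_struct_scheme \<Rightarrow> ('v \<Rightarrow> 'w set) \<Rightarrow> ('p, 'v) fm \<Rightarrow> 'w set" where
  "sem M \<rho> (Prop P) = mV M P"
| "sem M \<rho> (Var X) = \<rho> X"
| "sem M \<rho> Bot = mWb M"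
| "sem M \<rho> (And f g) = sem M \<rho> f \<inter> sem M \<rho> g"
| "sem M \<rho> (Or f g) = sem M \<rho> f \<union> sem M \<rho> g"
| "sem M \<rho> (Imp f g) =
     {w \<in> mW M. \<forall>v. (w, v) \<in> mLe M \<and> v \<in> sem M \<rho> f \<longrightarrow> v \<in> sem M \<rho> g}"
| "sem M \<rho> (Box f) =
     {w \<in> mW M. \<forall>u. (w, u) \<in> mLe M O mR M \<longrightarrow> u \<in> sem M \<rho> f}"
| "sem M \<rho> (Dia f) =
     {w \<in> mW M. \<forall>v. (w, v) \<in> mLe M \<longrightarrow> (\<exists>u. (v, u) \<in> mR M \<and> u \<in> sem M \<rho> f)}"
| "sem M \<rho> (Mu X f) = lfp_on (mW M) (\<lambda>A. sem M (\<rho>(X := A)) f)"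
| "sem M \<rho> (Nu X f) = gfp_on (mW M) (\<lambda>A. sem M (\<rho>(X := A)) f)"

text \<open>Satisfaction of a sentence (the variable assignment is irrelevant for sentences).\<close>
definition sat :: "('w, 'p, 'x) ck_struct_scheme \<Rightarrow> 'w \<Rightarrow> ('p, 'v) fm \<Rightarrow> bool" where
  "sat M w f \<longleftrightarrow> w \<in> sem M (\<lambda>_. {}) f"

datatype role = Verifier | Refuter

fun dual :: "role \<Rightarrow> role" where
  "dual Verifier = Refuter"
| "dual Refuter = Verifier"

datatype player = PI | PII

fun other :: "player \<Rightarrow> player" where
  "other PI = PII"
| "other PII = PI"

text \<open>Positions: GP v psi Q = <v,psi,Q>; GDia v psi Q = <v, hat-Dia psi, Q>;
  GImp v psi theta Q = <v, psi ? theta, Q>. Q is the current role of player I.\<close>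
datatype ('w, 'p, 'v) gpos =
    GP 'w "('p, 'v) fm" role
  | GDia 'w "('p, 'v) fm" role
  | GImp 'w "('p, 'v) fm" "('p, 'v) fm" role

fun role_I :: "('w, 'p, 'v) gpos \<Rightarrow> role" where
  "role_I (GP v f Q) = Q"
| "role_I (GDia v f Q) = Q"
| "role_I (GImp v f g Q) = Q"

fun owner_role :: "('w, 'p, 'x) ck_struct_scheme \<Rightarrow> ('p, 'v) fm \<Rightarrow> ('w, 'p, 'v) gpos \<Rightarrow> role" where
  "owner_role M \<phi> (GP v (Prop P) Q) = (if v \<in> mV M P then Refuter else Verifier)"
| "owner_role M \<phi> (GP v Bot Q) = (if v \<in> mWb M then Refuter else Verifier)"
| "owner_role M \<phi> (GP v (Var X) Q) = (if (\<exists>g. Mu X g \<in> Sub \<phi>) then Verifier else Refuter)"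
| "owner_role M \<phi> (GP v (Or f g) Q) = Verifier"
| "owner_role M \<phi> (GP v (Mu X f) Q) = Verifier"
| "owner_role M \<phi> (GP v (And f g) Q) = Refuter"
| "owner_role M \<phi> (GP v (Imp f g) Q) = Refuter"
| "owner_role M \<phi> (GP v (Box f) Q) = Refuter"
| "owner_role M \<phi> (GP v (Dia f) Q) = Refuter"
| "owner_role M \<phi> (GP v (Nu X f) Q) = Refuter"
| "owner_role M \<phi> (GDia v f Q) = Verifier"
| "owner_role M \<phi> (GImp v f g Q) = Verifier"

definition owner :: "('w, 'p, 'x) ck_struct_scheme \<Rightarrow> ('p, 'v) fm \<Rightarrow> ('w, 'p, 'v) gpos \<Rightarrow> player" where
  "owner M \<phi> p = (if owner_role M \<phi> p = role_I p then PI else PII)"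

fun moves :: "('w, 'p, 'x) ck_struct_scheme \<Rightarrow> ('p, 'v) fm \<Rightarrow> ('w, 'p, 'v) gpos \<Rightarrow> ('w, 'p, 'v) gpos set" where
  "moves M \<phi> (GP v (Prop P) Q) = {}"
| "moves M \<phi> (GP v Bot Q) = {}"
| "moves M \<phi> (GP v (Var X) Q) =
     {GP v F Q | F. F \<in> Sub \<phi> \<and> (\<exists>g. F = Mu X g \<or> F = Nu X g)}"
| "moves M \<phi> (GP v (Or f g) Q) = {GP v f Q, GP v g Q}"
| "moves M \<phi> (GP v (And f g) Q) = {GP v f Q, GP v g Q}"
| "moves M \<phi> (GP v (Imp f g) Q) = {GImp u f g Q | u. (v, u) \<in> mLe M}"
| "moves M \<phi> (GP v (Box f) Q) = {GP u f Q | u. (v, u) \<in> mLe M O mR M}"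
| "moves M \<phi> (GP v (Dia f) Q) = {GDia u f Q | u. (v, u) \<in> mLe M}"
| "moves M \<phi> (GP v (Mu X f) Q) = {GP v f Q}"
| "moves M \<phi> (GP v (Nu X f) Q) = {GP v f Q}"
| "moves M \<phi> (GDia v f Q) = {GP u f Q | u. (v, u) \<in> mR M}"
| "moves M \<phi> (GImp v f g Q) = {GP v f (dual Q), GP v g Q}"

definition init_pos :: "'w \<Rightarrow> ('p, 'v) fm \<Rightarrow> ('w, 'p, 'v) gpos" where
  "init_pos w \<phi> = GP w \<phi> Verifier"

definition reachable :: "('w, 'p, 'x) ck_struct_scheme \<Rightarrow> 'w \<Rightarrow> ('p, 'v) fm \<Rightarrow> ('w, 'p, 'v) gpos \<Rightarrow> bool" where
  "reachable M w \<phi> p \<longleftrightarrow> (init_pos w \<phi>, p) \<in> {(a, b). b \<in> moves M \<phi> a}\<^sup>*"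

definition fin_run :: "('w, 'p, 'x) ck_struct_scheme \<Rightarrow> 'w \<Rightarrow> ('p, 'v) fm \<Rightarrow> ('w, 'p, 'v) gpos list \<Rightarrow> bool" where
  "fin_run M w \<phi> ps \<longleftrightarrow> ps \<noteq> [] \<and> hd ps = init_pos w \<phi> \<and>
     (\<forall>i. Suc i < length ps \<longrightarrow> ps ! Suc i \<in> moves M \<phi> (ps ! i)) \<and>
     moves M \<phi> (last ps) = {}"

definition inf_run :: "('w, 'p, 'x) ck_struct_scheme \<Rightarrow> 'w \<Rightarrow> ('p, 'v) fm \<Rightarrow> (nat \<Rightarrow> ('w, 'p, 'v) gpos) \<Rightarrow> bool" where
  "inf_run M w \<phi> r \<longleftrightarrow> r 0 = init_pos w \<phi> \<and> (\<forall>n. r (Suc n) \<in> moves M \<phi> (r n))"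

definition inf_regen :: "(nat \<Rightarrow> ('w, 'p, 'v) gpos) \<Rightarrow> ('p, 'v) fm \<Rightarrow> bool" where
  "inf_regen r F \<longleftrightarrow>
     infinite {n. \<exists>v X Q. r n = GP v (Var X) Q \<and> r (Suc n) = GP v F Q}"

definition owned_by_I :: "('w, 'p, 'x) ck_struct_scheme \<Rightarrow> 'w \<Rightarrow> ('p, 'v) fm \<Rightarrow> ('p, 'v) fm \<Rightarrow> bool" where
  "owned_by_I M w \<phi> F \<longleftrightarrow>
     (\<exists>v Q. reachable M w \<phi> (GP v F Q) \<and>
        ((Q = Verifier \<and> (\<exists>X g. F = Nu X g)) \<or> (Q = Refuter \<and> (\<exists>X g. F = Mu X g))))"

definition fin_winner :: "('w, 'p, 'x) ck_struct_scheme \<Rightarrow> ('p, 'v) fm \<Rightarrow> ('w, 'p, 'v) gpos list \<Rightarrow> player" where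
  "fin_winner M \<phi> ps = other (owner M \<phi> (last ps))"

definition inf_winner :: "('w, 'p, 'x) ck_struct_scheme \<Rightarrow> 'w \<Rightarrow> ('p, 'v) fm \<Rightarrow> (nat \<Rightarrow> ('w, 'p, 'v) gpos) \<Rightarrow> player" where
  "inf_winner M w \<phi> r =
     (if \<exists>F. inf_regen r F \<and> (\<forall>G. inf_regen r G \<longrightarrow> G \<in> Sub F) \<and> owned_by_I M w \<phi> F
      then PI else PII)"

definition strategy :: "('w, 'p, 'x) ck_struct_scheme \<Rightarrow> ('p, 'v) fm \<Rightarrow> player \<Rightarrow> (('w, 'p, 'v) gpos \<Rightarrow> ('w, 'p, 'v) gpos) \<Rightarrow> bool" where
  "strategy M \<phi> pl \<sigma> \<longleftrightarrow>
     (\<forall>p. owner M \<phi> p = pl \<and> moves M \<phi> p \<noteq> {} \<longrightarrow> \<sigma> p \<in> moves M \<phi> p)"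

definition fin_follows :: "('w, 'p, 'x) ck_struct_scheme \<Rightarrow> ('p, 'v) fm \<Rightarrow> player \<Rightarrow> (('w, 'p, 'v) gpos \<Rightarrow> ('w, 'p, 'v) gpos) \<Rightarrow> ('w, 'p, 'v) gpos list \<Rightarrow> bool" where
  "fin_follows M \<phi> pl \<sigma> ps \<longleftrightarrow>
     (\<forall>i. Suc i < length ps \<and> owner M \<phi> (ps ! i) = pl \<longrightarrow> ps ! Suc i = \<sigma> (ps ! i))"

definition inf_follows :: "('w, 'p, 'x) ck_struct_scheme \<Rightarrow> ('p, 'v) fm \<Rightarrow> player \<Rightarrow> (('w, 'p, 'v) gpos \<Rightarrow> ('w, 'p, 'v) gpos) \<Rightarrow> (nat \<Rightarrow> ('w, 'p, 'v) gpos) \<Rightarrow> bool" where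
  "inf_follows M \<phi> pl \<sigma> r \<longleftrightarrow>
     (\<forall>n. owner M \<phi> (r n) = pl \<longrightarrow> r (Suc n) = \<sigma> (r n))"

definition winning_strategy :: "('w, 'p, 'x) ck_struct_scheme \<Rightarrow> 'w \<Rightarrow> ('p, 'v) fm \<Rightarrow> player \<Rightarrow> (('w, 'p, 'v) gpos \<Rightarrow> ('w, 'p, 'v) gpos) \<Rightarrow> bool" where
  "winning_strategy M w \<phi> pl \<sigma> \<longleftrightarrow>
     strategy M \<phi> pl \<sigma> \<and>
     (\<forall>ps. fin_run M w \<phi> ps \<and> fin_follows M \<phi> pl \<sigma> ps \<longrightarrow> fin_winner M \<phi> ps = pl) \<and>
     (\<forall>r. inf_run M w \<phi> r \<and> inf_follows M \<phi> pl \<sigma> r \<longrightarrow> inf_winner M w \<phi> r = pl)"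

definition has_winning_strategy :: "('w, 'p, 'x) ck_struct_scheme \<Rightarrow> 'w \<Rightarrow> ('p, 'v) fm \<Rightarrow> player \<Rightarrow> bool" where
  "has_winning_strategy M w \<phi> pl \<longleftrightarrow>
     (\<exists>\<sigma> :: ('w, 'p, 'v) gpos \<Rightarrow> ('w, 'p, 'v) gpos. winning_strategy M w \<phi> pl \<sigma>)"

end

theory Submission
  imports Defs "HOL-Library.Infinite_Set"
begin

(* Fix a player P and call a fixed-point variable adverse if P has to verify its least or refute
   its greatest fixed point. A signature assigns an ordinal to every variable; interpreting each
   adverse variable by the corresponding approximant of its fixed point, a position is won by P
   under a signature if the claim P defends there is true in this interpretation. Away from
   binders such positions are closed under the opponent's moves and P can always move to one;
   P's strategy chooses a successor whose least signature, compared lexicographically with outer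
   variables first, is smallest. Along a play signatures do not increase except at the unfolding
   of a binder, and every cycle through an adverse variable strictly decreases its ordinal while
   keeping the outer ones. By well-foundedness the outermost variable regenerated infinitely often is not
   adverse, i.e. its fixed point is owned by P, so P wins every play. Applied to I when
   M, w |= phi and to II otherwise, and since the two players cannot both have winning
   strategies, this yields both equivalences. *)

section \<open>Subformulas, binders and polarity\<close>

lemma Sub_refl [simp]: "\<psi> \<in> Sub \<psi>"
  by (cases \<psi>) auto

lemma Sub_trans: "\<psi> \<in> Sub \<chi> \<Longrightarrow> \<chi> \<in> Sub \<theta> \<Longrightarrow> \<psi> \<in> Sub \<theta>"
  by (induction \<theta>) auto

lemma size_le_if_Sub: "\<psi> \<in> Sub \<chi> \<Longrightarrow> size \<psi> \<le> size \<chi>"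
  by (induction \<chi>) auto

lemma size_less_if_Sub: "\<psi> \<in> Sub \<chi> \<Longrightarrow> \<psi> \<noteq> \<chi> \<Longrightarrow> size \<psi> < size \<chi>"
  by (induction \<chi>) (auto dest: size_le_if_Sub)

lemma Sub_antisym: "\<psi> \<in> Sub \<chi> \<Longrightarrow> \<chi> \<in> Sub \<psi> \<Longrightarrow> \<psi> = \<chi>"
  using size_le_if_Sub size_less_if_Sub by fastforce

lemma finite_Sub: "finite (Sub \<chi>)"
  by (induction \<chi>) auto

lemma Var_Sub_if_free: "Y \<in> free_vars \<psi> \<Longrightarrow> Var Y \<in> Sub \<psi>"
  by (induction \<psi>) auto

lemma occurs_iff_Var_Sub: "occurs X \<psi> \<longleftrightarrow> Var X \<in> Sub \<psi>"
  by (induction \<psi>) auto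

lemma mu_formula_Sub: "\<psi> \<in> Sub \<chi> \<Longrightarrow> mu_formula \<chi> \<Longrightarrow> mu_formula \<psi>"
  by (induction \<chi>) auto

lemma binder_count_Sub_mono: "\<psi> \<in> Sub \<chi> \<Longrightarrow> binder_count X \<psi> \<le> binder_count X \<chi>"
  by (induction \<chi>) auto

definition binds :: "'v \<Rightarrow> ('p, 'v) fm \<Rightarrow> bool" where
  "binds X F \<longleftrightarrow> (\<exists>g. F = Mu X g \<or> F = Nu X g)"

lemma binds_simps [simp]:
  "\<not> binds X (Prop P)" "\<not> binds X Bot" "\<not> binds X (Var Y)" "\<not> binds X (And f g)"
  "\<not> binds X (Or f g)" "\<not> binds X (Imp f g)" "\<not> binds X (Box f)" "\<not> binds X (Dia f)"
  "binds X (Mu Y f) \<longleftrightarrow> Y = X" "binds X (Nu Y f) \<longleftrightarrow> Y = X"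
  by (auto simp: binds_def)

fun body :: "('p, 'v) fm \<Rightarrow> ('p, 'v) fm" where
  "body (Mu X g) = g"
| "body (Nu X g) = g"
| "body _ = Bot"

lemma binds_cases [consumes 1, case_names Mu Nu]:
  "binds X F \<Longrightarrow> (F = Mu X (body F) \<Longrightarrow> thesis) \<Longrightarrow> (F = Nu X (body F) \<Longrightarrow> thesis) \<Longrightarrow> thesis"
  by (auto simp: binds_def)

lemma body_Sub: "binds X F \<Longrightarrow> body F \<in> Sub F"
  by (auto simp: binds_def)

lemma size_body: "binds X F \<Longrightarrow> size (body F) < size F"
  by (auto simp: binds_def)

lemma free_vars_body: "binds X F \<Longrightarrow> free_vars (body F) \<subseteq> insert X (free_vars F)"
  by (auto simp: binds_def)

lemma binder_count_binds: "binds X F \<Longrightarrow> binder_count X F = Suc (binder_count X (body F))"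
  by (auto simp: binds_def)

lemma binds_unique: "binds X F \<Longrightarrow> binds Y F \<Longrightarrow> X = Y"
  by (auto simp: binds_def)

lemma binder_count_pos: "binds X F \<Longrightarrow> F \<in> Sub \<chi> \<Longrightarrow> 1 \<le> binder_count X \<chi>"
  by (induction \<chi>) (auto simp: binds_def)

lemma binder_above_free:
  assumes "\<psi> \<in> Sub \<chi>" "Y \<in> free_vars \<psi>" "Y \<notin> free_vars \<chi>"
  shows "\<exists>F. binds Y F \<and> F \<in> Sub \<chi> \<and> \<psi> \<in> Sub (body F)"
  using assms by (induction \<chi>) (auto, (metis Sub_refl binds_simps body.simps)+)

lemma occurs_bound_if_binder: "binds X F \<Longrightarrow> F \<in> Sub \<chi> \<Longrightarrow> Var X \<in> Sub (body F) \<Longrightarrow> occurs_bound X \<chi>"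
  by (induction \<chi>) (auto simp: binds_def occurs_iff_Var_Sub)

fun occ_pol :: "('p, 'v) fm \<Rightarrow> ('p, 'v) fm \<Rightarrow> bool \<Rightarrow> bool" where
  "occ_pol (Prop P) \<psi> b \<longleftrightarrow> \<psi> = Prop P \<and> b"
| "occ_pol Bot \<psi> b \<longleftrightarrow> \<psi> = Bot \<and> b"
| "occ_pol (Var X) \<psi> b \<longleftrightarrow> \<psi> = Var X \<and> b"
| "occ_pol (And f g) \<psi> b \<longleftrightarrow> (\<psi> = And f g \<and> b) \<or> occ_pol f \<psi> b \<or> occ_pol g \<psi> b"
| "occ_pol (Or f g) \<psi> b \<longleftrightarrow> (\<psi> = Or f g \<and> b) \<or> occ_pol f \<psi> b \<or> occ_pol g \<psi> b"
| "occ_pol (Imp f g) \<psi> b \<longleftrightarrow> (\<psi> = Imp f g \<and> b) \<or> occ_pol f \<psi> (\<not> b) \<or> occ_pol g \<psi> b"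
| "occ_pol (Box f) \<psi> b \<longleftrightarrow> (\<psi> = Box f \<and> b) \<or> occ_pol f \<psi> b"
| "occ_pol (Dia f) \<psi> b \<longleftrightarrow> (\<psi> = Dia f \<and> b) \<or> occ_pol f \<psi> b"
| "occ_pol (Mu X f) \<psi> b \<longleftrightarrow> (\<psi> = Mu X f \<and> b) \<or> occ_pol f \<psi> b"
| "occ_pol (Nu X f) \<psi> b \<longleftrightarrow> (\<psi> = Nu X f \<and> b) \<or> occ_pol f \<psi> b"

lemma occ_pol_self: "occ_pol \<chi> \<chi> True"
  by (cases \<chi>) auto

lemma occ_pol_Sub: "occ_pol \<chi> \<psi> b \<Longrightarrow> \<psi> \<in> Sub \<chi>"
  by (induction \<chi> arbitrary: b) auto

lemma Sub_imp_occ_pol: "\<psi> \<in> Sub \<chi> \<Longrightarrow> \<exists>b. occ_pol \<chi> \<psi> b"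
  by (induction \<chi>) (auto simp: ex_bool_eq)

lemma occ_pol_trans: "occ_pol \<chi> \<psi> b \<Longrightarrow> occ_pol \<psi> \<theta> c \<Longrightarrow> occ_pol \<chi> \<theta> (b = c)"
proof (induction \<chi> arbitrary: b)
  case (Imp f g)
  then show ?case by (cases b; cases c) (auto; metis (full_types))+
qed auto

lemma occ_pol_children:
  "occ_pol \<chi> (And f g) b \<Longrightarrow> occ_pol \<chi> f b" "occ_pol \<chi> (And f g) b \<Longrightarrow> occ_pol \<chi> g b"
  "occ_pol \<chi> (Or f g) b \<Longrightarrow> occ_pol \<chi> f b" "occ_pol \<chi> (Or f g) b \<Longrightarrow> occ_pol \<chi> g b"
  "occ_pol \<chi> (Imp f g) b \<Longrightarrow> occ_pol \<chi> f (\<not> b)" "occ_pol \<chi> (Imp f g) b \<Longrightarrow> occ_pol \<chi> g b"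
  "occ_pol \<chi> (Box f) b \<Longrightarrow> occ_pol \<chi> f b" "occ_pol \<chi> (Dia f) b \<Longrightarrow> occ_pol \<chi> f b"
  "occ_pol \<chi> (Mu X f) b \<Longrightarrow> occ_pol \<chi> f b" "occ_pol \<chi> (Nu X f) b \<Longrightarrow> occ_pol \<chi> f b"
  using occ_pol_trans[of \<chi> _ b _ True] occ_pol_trans[of \<chi> "Imp f g" b f False] by (auto simp: occ_pol_self)

lemma binder_count_pos_if_occ_pol: "binds X F \<Longrightarrow> occ_pol \<psi> F c \<Longrightarrow> 1 \<le> binder_count X \<psi>"
  by (rule binder_count_pos[OF _ occ_pol_Sub])

lemma binder_count_ge_2:
  assumes "binds X F1" "binds X F2" "occ_pol \<chi> F1 c1" "occ_pol \<chi> F2 c2" "(F1, c1) \<noteq> (F2, c2)"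
  shows "2 \<le> binder_count X \<chi>"
  using assms(3-5)
proof (induction \<chi> arbitrary: c1 c2)
  note pos = binder_count_pos_if_occ_pol[OF assms(1)] binder_count_pos_if_occ_pol[OF assms(2)]
  {
    case (And f g)
    consider "occ_pol f F1 c1" "occ_pol f F2 c2" | "occ_pol g F1 c1" "occ_pol g F2 c2"
      | "1 \<le> binder_count X f" "1 \<le> binder_count X g"
      using And.prems(1,2) assms(1,2) pos by fastforce
    then show ?case
      by cases (use And.IH[OF _ _ And.prems(3)] in force)+
  next
    case (Or f g)
    consider "occ_pol f F1 c1" "occ_pol f F2 c2" | "occ_pol g F1 c1" "occ_pol g F2 c2"
      | "1 \<le> binder_count X f" "1 \<le> binder_count X g"
      using Or.prems(1,2) assms(1,2) pos by fastforce
    then show ?case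
      by cases (use Or.IH[OF _ _ Or.prems(3)] in force)+
  next
    case (Imp f g)
    consider "occ_pol f F1 (\<not> c1)" "occ_pol f F2 (\<not> c2)" | "occ_pol g F1 c1" "occ_pol g F2 c2"
      | "1 \<le> binder_count X f" "1 \<le> binder_count X g"
      using Imp.prems(1,2) assms(1,2) pos by fastforce
    then show ?case
      by cases (use Imp.IH(1)[of "\<not> c1" "\<not> c2"] Imp.IH(2) Imp.prems(3) in force)+
  next
    case (Mu Y f)
    consider "occ_pol f F1 c1" "occ_pol f F2 c2" | "Y = X" "1 \<le> binder_count X f"
      using Mu.prems assms(1,2) pos by fastforce
    then show ?case
      by cases (use Mu.IH[OF _ _ Mu.prems(3)] in force)+
  next
    case (Nu Y f)
    consider "occ_pol f F1 c1" "occ_pol f F2 c2" | "Y = X" "1 \<le> binder_count X f"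
      using Nu.prems assms(1,2) pos by fastforce
    then show ?case
      by cases (use Nu.IH[OF _ _ Nu.prems(3)] in force)+
  }
qed (use assms(1,2) in auto)

lemma occ_pol_Var_binder:
  assumes "occ_pol \<chi> (Var X) b" "X \<notin> free_vars \<chi>"
  shows "\<exists>F c b'. binds X F \<and> occ_pol \<chi> F c \<and> occ_pol (body F) (Var X) b' \<and> b = (c = b')"
  using assms
proof (induction \<chi> arbitrary: b)
  have lift: "\<exists>F c b'. binds X F \<and> occ_pol \<chi> F c \<and> occ_pol (body F) (Var X) b' \<and> b = (c = b')"
    if "\<exists>F c b'. binds X F \<and> occ_pol f F c \<and> occ_pol (body F) (Var X) b' \<and> b = (c = b')"
      "\<And>F c. occ_pol f F c \<Longrightarrow> occ_pol \<chi> F c" for \<chi> f b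
    using that by blast
  {
    case (And f g)
    then consider "occ_pol f (Var X) b" "X \<notin> free_vars f" | "occ_pol g (Var X) b" "X \<notin> free_vars g"
      by auto
    then show ?case
      by cases (intro lift[OF And.IH(1)] lift[OF And.IH(2)]; simp)+
  next
    case (Or f g)
    then consider "occ_pol f (Var X) b" "X \<notin> free_vars f" | "occ_pol g (Var X) b" "X \<notin> free_vars g"
      by auto
    then show ?case
      by cases (intro lift[OF Or.IH(1)] lift[OF Or.IH(2)]; simp)+
  next
    case (Imp f g)
    then consider "occ_pol f (Var X) (\<not> b)" "X \<notin> free_vars f" | "occ_pol g (Var X) b" "X \<notin> free_vars g"
      by auto
    then show ?case
    proof cases
      case 1
      then obtain F c b' where "binds X F" "occ_pol f F c" "occ_pol (body F) (Var X) b'" "(\<not> b) = (c = b')"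
        using Imp.IH(1) by blast
      then show ?thesis
        by (intro exI[of _ F] exI[of _ "\<not> c"] exI[of _ b']) auto
    qed (intro lift[OF Imp.IH(2)]; simp)
  next
    case (Box f)
    then show ?case
      by (intro lift[OF Box.IH]; simp)
  next
    case (Dia f)
    then show ?case
      by (intro lift[OF Dia.IH]; simp)
  next
    case (Mu Y f)
    show ?case
    proof (cases "Y = X")
      case True
      with Mu.prems show ?thesis
        by (intro exI[of _ "Mu Y f"] exI[of _ True] exI[of _ b]) (auto simp: occ_pol_self)
    qed (use Mu.prems in \<open>intro lift[OF Mu.IH]; simp\<close>)
  next
    case (Nu Y f)
    show ?case
    proof (cases "Y = X")
      case True
      with Nu.prems show ?thesis
        by (intro exI[of _ "Nu Y f"] exI[of _ True] exI[of _ b]) (auto simp: occ_pol_self)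
    qed (use Nu.prems in \<open>intro lift[OF Nu.IH]; simp\<close>)
  }
qed auto

lemma occ_pol_Var_if_polar:
  "polar X s \<psi> \<Longrightarrow> occ_pol \<psi> (Var X) b \<Longrightarrow> binder_count X \<psi> = 0 \<Longrightarrow> b = s"
  by (induction \<psi> arbitrary: s b) (auto split: if_splits)

section \<open>Well-bounded sentences\<close>

locale bounded_sentence =
  fixes \<phi> :: "('p, 'v) fm"
  assumes mu_formula: "mu_formula \<phi>" and sentence: "sentence \<phi>" and well_bounded: "well_bounded \<phi>"
begin

definition vars :: "'v set" where
  "vars = {Y. Var Y \<in> Sub \<phi>}"

definition binder_of :: "'v \<Rightarrow> ('p, 'v) fm" where
  "binder_of Y = (THE F. F \<in> Sub \<phi> \<and> binds Y F)"

lemma free_vars_empty: "free_vars \<phi> = {}"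
  using sentence by (simp add: sentence_def)

lemma finite_vars: "finite vars"
proof -
  have "Var ` vars \<subseteq> Sub \<phi>"
    unfolding vars_def by auto
  then show ?thesis
    using finite_Sub by (rule finite_imageD[OF finite_subset]) (simp add: inj_on_def)
qed

lemma vars_Sub: "\<psi> \<in> Sub \<phi> \<Longrightarrow> Var Y \<in> Sub \<psi> \<Longrightarrow> Y \<in> vars"
  unfolding vars_def using Sub_trans by blast

lemma free_vars_Sub: "\<psi> \<in> Sub \<phi> \<Longrightarrow> free_vars \<psi> \<subseteq> vars"
  by (auto dest: Var_Sub_if_free intro: vars_Sub)

lemma binder_above_var: "Y \<in> vars \<Longrightarrow> \<exists>F. binds Y F \<and> F \<in> Sub \<phi> \<and> Var Y \<in> Sub (body F)"
  using binder_above_free[of "Var Y" \<phi> Y] free_vars_empty unfolding vars_def by simp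

lemma binder_count_var:
  assumes "Y \<in> vars"
  shows "binder_count Y \<phi> = 1"
proof -
  obtain F where "binds Y F" "F \<in> Sub \<phi>" "Var Y \<in> Sub (body F)"
    using binder_above_var[OF assms] by blast
  then have "occurs_bound Y \<phi>"
    by (rule occurs_bound_if_binder)
  then show ?thesis
    using well_bounded unfolding well_bounded_def by blast
qed

lemma binder_unique:
  assumes "Y \<in> vars" "binds Y F1" "binds Y F2" "F1 \<in> Sub \<phi>" "F2 \<in> Sub \<phi>"
  shows "F1 = F2"
proof (rule ccontr)
  assume "F1 \<noteq> F2"
  moreover obtain c1 c2 where "occ_pol \<phi> F1 c1" "occ_pol \<phi> F2 c2"
    using Sub_imp_occ_pol[OF assms(4)] Sub_imp_occ_pol[OF assms(5)] by blast
  ultimately have "2 \<le> binder_count Y \<phi>"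
    using binder_count_ge_2[OF assms(2,3)] by simp
  then show False
    using binder_count_var[OF assms(1)] by simp
qed

lemma binder_of:
  assumes "Y \<in> vars"
  shows "binder_of Y \<in> Sub \<phi>" "binds Y (binder_of Y)" "Var Y \<in> Sub (body (binder_of Y))"
proof -
  obtain F where F: "binds Y F" "F \<in> Sub \<phi>" "Var Y \<in> Sub (body F)"
    using binder_above_var[OF assms] by blast
  have "binder_of Y = F"
    unfolding binder_of_def by (rule the_equality) (use F binder_unique[OF assms] in auto)
  with F show "binder_of Y \<in> Sub \<phi>" "binds Y (binder_of Y)" "Var Y \<in> Sub (body (binder_of Y))"
    by auto
qed

lemma binder_eqI: "Y \<in> vars \<Longrightarrow> binds Y F \<Longrightarrow> F \<in> Sub \<phi> \<Longrightarrow> binder_of Y = F"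
  by (metis binder_of(1,2) binder_unique)

lemma binder_inj: "X \<in> vars \<Longrightarrow> Y \<in> vars \<Longrightarrow> binder_of X = binder_of Y \<Longrightarrow> X = Y"
  by (metis binder_of(2) binds_unique)

lemma binder_count_body:
  assumes "Y \<in> vars"
  shows "binder_count Y (body (binder_of Y)) = 0"
  using binder_count_Sub_mono[OF binder_of(1)[OF assms], of Y] binder_count_var[OF assms]
    binder_count_binds[OF binder_of(2)[OF assms]] by simp

lemma positive_body:
  assumes "Y \<in> vars"
  shows "positive Y (body (binder_of Y))"
  using binder_of(2)[OF assms] mu_formula_Sub[OF binder_of(1)[OF assms] mu_formula]
  by (cases rule: binds_cases) (metis mu_formula.simps(9,10))+

lemma free_var_binder_above:
  assumes "\<psi> \<in> Sub \<phi>" "Y \<in> free_vars \<psi>"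
  shows "Y \<in> vars" "\<psi> \<in> Sub (body (binder_of Y))" "size \<psi> < size (binder_of Y)"
proof -
  show Y: "Y \<in> vars"
    using free_vars_Sub[OF assms(1)] assms(2) by (rule subsetD)
  obtain F where "binds Y F" "F \<in> Sub \<phi>" "\<psi> \<in> Sub (body F)"
    using binder_above_free[OF assms] free_vars_empty by auto
  then show "\<psi> \<in> Sub (body (binder_of Y))"
    using binder_eqI[OF Y] by simp
  then show "size \<psi> < size (binder_of Y)"
    using size_body[OF binder_of(2)[OF Y]] size_le_if_Sub by fastforce
qed

lemma size_binder_less_if_free:
  assumes "Z \<in> vars" "Y \<in> free_vars (binder_of Z)"
  shows "Y \<in> vars" "size (binder_of Z) < size (binder_of Y)"
  using free_var_binder_above[OF binder_of(1)[OF assms(1)] assms(2)] by auto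

lemma size_less_binder_if_not_Sub:
  assumes "\<psi> \<in> Sub \<phi>" "Var Y \<in> Sub \<psi>" "binder_of Y \<notin> Sub \<psi>"
  shows "size \<psi> < size (binder_of Y)"
proof (cases "Y \<in> free_vars \<psi>")
  case True
  then show ?thesis
    using free_var_binder_above(3) assms(1) by blast
next
  case False
  then obtain F where "binds Y F" "F \<in> Sub \<psi>"
    using binder_above_free[OF assms(2)] by auto
  moreover have "Y \<in> vars"
    using vars_Sub assms(1,2) .
  ultimately have "binder_of Y \<in> Sub \<psi>"
    using binder_eqI Sub_trans[OF _ assms(1)] by metis
  with assms(3) show ?thesis
    by contradiction
qed

lemma binder_polarity_unique:
  assumes "Y \<in> vars" "occ_pol \<phi> (binder_of Y) c1" "occ_pol \<phi> (binder_of Y) c2"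
  shows "c1 = c2"
proof (rule ccontr)
  assume "c1 \<noteq> c2"
  then have "2 \<le> binder_count Y \<phi>"
    using binder_count_ge_2[OF binder_of(2)[OF assms(1)] binder_of(2)[OF assms(1)] assms(2,3)] by simp
  then show False
    using binder_count_var[OF assms(1)] by simp
qed

lemma Var_polarity:
  assumes "occ_pol \<phi> (Var X) b" "occ_pol \<phi> (binder_of X) c"
  shows "b = c"
proof -
  have X: "X \<in> vars"
    using assms(1) occ_pol_Sub unfolding vars_def by blast
  obtain F c' b' where F: "binds X F" "occ_pol \<phi> F c'" "occ_pol (body F) (Var X) b'" "b = (c' = b')"
    using occ_pol_Var_binder[OF assms(1)] free_vars_empty by blast
  have "binder_of X = F"
    using binder_eqI[OF X F(1) occ_pol_Sub[OF F(2)]] .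
  then have "b' = True"
    using occ_pol_Var_if_polar[OF positive_body[OF X] _ binder_count_body[OF X]] F(3) by simp
  moreover have "c' = c"
    using binder_polarity_unique[OF X] F(2) assms(2) \<open>binder_of X = F\<close> by simp
  ultimately show ?thesis
    using F(4) by simp
qed

end

section \<open>Semantics and fixed points\<close>

lemma sem_cong: "(\<And>Y. Y \<in> free_vars \<psi> \<Longrightarrow> \<rho> Y = \<rho>' Y) \<Longrightarrow> sem M \<rho> \<psi> = sem M \<rho>' \<psi>"
proof (induction \<psi> arbitrary: \<rho> \<rho>')
  case (And f g)
  have "sem M \<rho> f = sem M \<rho>' f" "sem M \<rho> g = sem M \<rho>' g"
    by (rule And.IH; use And.prems in simp)+
  then show ?case by simp
next
  case (Or f g)
  have "sem M \<rho> f = sem M \<rho>' f" "sem M \<rho> g = sem M \<rho>' g"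
    by (rule Or.IH; use Or.prems in simp)+
  then show ?case by simp
next
  case (Imp f g)
  have "sem M \<rho> f = sem M \<rho>' f" "sem M \<rho> g = sem M \<rho>' g"
    by (rule Imp.IH; use Imp.prems in simp)+
  then show ?case by simp
next
  case (Mu X f)
  have "sem M (\<rho>(X := A)) f = sem M (\<rho>'(X := A)) f" for A
    by (rule Mu.IH) (use Mu.prems in simp)
  then show ?case by simp
next
  case (Nu X f)
  have "sem M (\<rho>(X := A)) f = sem M (\<rho>'(X := A)) f" for A
    by (rule Nu.IH) (use Nu.prems in simp)
  then show ?case by simp
next
  case (Box f)
  have "sem M \<rho> f = sem M \<rho>' f"
    by (rule Box.IH) (use Box.prems in simp)
  then show ?case by simp
next
  case (Dia f)
  have "sem M \<rho> f = sem M \<rho>' f"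
    by (rule Dia.IH) (use Dia.prems in simp)
  then show ?case by simp
qed simp_all

lemma lfp_on_mono: "(\<And>A. G1 A \<subseteq> G2 A) \<Longrightarrow> lfp_on W G1 \<subseteq> lfp_on W G2"
  unfolding lfp_on_def by (rule Inter_anti_mono) blast

lemma gfp_on_mono: "(\<And>A. G1 A \<subseteq> G2 A) \<Longrightarrow> gfp_on W G1 \<subseteq> gfp_on W G2"
  unfolding gfp_on_def by (rule Union_mono) blast

lemma lfp_on_subset: "G W \<subseteq> W \<Longrightarrow> lfp_on W G \<subseteq> W"
  unfolding lfp_on_def by blast

lemma gfp_on_subset: "gfp_on W G \<subseteq> W"
  unfolding gfp_on_def by blast

lemma lfp_on_const: "C \<subseteq> W \<Longrightarrow> lfp_on W (\<lambda>_. C) = C"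
  unfolding lfp_on_def by blast

lemma gfp_on_const: "C \<subseteq> W \<Longrightarrow> gfp_on W (\<lambda>_. C) = C"
  unfolding gfp_on_def by blast

lemma sem_vacuous_fixpoint:
  assumes "Y \<notin> free_vars g" "sem M \<rho> g \<subseteq> mW M"
  shows "sem M \<rho> (Mu Y g) = sem M \<rho> g" "sem M \<rho> (Nu Y g) = sem M \<rho> g"
proof -
  have "(\<lambda>A. sem M (\<rho>(Y := A)) g) = (\<lambda>A. sem M \<rho> g)"
    using assms(1) by (intro ext sem_cong) auto
  then show "sem M \<rho> (Mu Y g) = sem M \<rho> g" "sem M \<rho> (Nu Y g) = sem M \<rho> g"
    by (simp_all only: sem.simps lfp_on_const[OF assms(2)] gfp_on_const[OF assms(2)])
qed

lemma sem_mono_polar: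
  assumes "polar X b \<psi>" "A \<subseteq> A'"
  shows "(b \<longrightarrow> sem M (\<rho>(X := A)) \<psi> \<subseteq> sem M (\<rho>(X := A')) \<psi>) \<and>
    (\<not> b \<longrightarrow> sem M (\<rho>(X := A')) \<psi> \<subseteq> sem M (\<rho>(X := A)) \<psi>)"
  using assms(1)
proof (induction \<psi> arbitrary: \<rho> b)
  case (Imp f g)
  then have "polar X (\<not> b) f" "polar X b g"
    by auto
  with Imp.IH[of _ \<rho>] show ?case
    by (cases b) (simp; blast)+
next
  case (Mu Y f)
  show ?case
  proof (cases "Y = X")
    case False
    with Mu.prems have f: "polar X b f"
      by simp
    have "(b \<longrightarrow> sem M (\<rho>(X := A, Y := C)) f \<subseteq> sem M (\<rho>(X := A', Y := C)) f) \<and>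
      (\<not> b \<longrightarrow> sem M (\<rho>(X := A', Y := C)) f \<subseteq> sem M (\<rho>(X := A, Y := C)) f)" for C
      using Mu.IH[OF f, of "\<rho>(Y := C)"] by (simp only: fun_upd_twist[OF False])
    then show ?thesis
      unfolding sem.simps by (intro conjI impI lfp_on_mono) blast+
  qed (simp del: fun_upd_apply)
next
  case (Nu Y f)
  show ?case
  proof (cases "Y = X")
    case False
    with Nu.prems have f: "polar X b f"
      by simp
    have "(b \<longrightarrow> sem M (\<rho>(X := A, Y := C)) f \<subseteq> sem M (\<rho>(X := A', Y := C)) f) \<and>
      (\<not> b \<longrightarrow> sem M (\<rho>(X := A', Y := C)) f \<subseteq> sem M (\<rho>(X := A, Y := C)) f)" for C
      using Nu.IH[OF f, of "\<rho>(Y := C)"] by (simp only: fun_upd_twist[OF False])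
    then show ?thesis
      unfolding sem.simps by (intro conjI impI gfp_on_mono) blast+
  qed (simp del: fun_upd_apply)
next
  case (And f g)
  then have "polar X b f" "polar X b g" by simp_all
  with And.IH[of b \<rho>] show ?case
    by (cases b) (simp only: sem.simps; blast)+
next
  case (Or f g)
  then have "polar X b f" "polar X b g" by simp_all
  with Or.IH[of b \<rho>] show ?case
    by (cases b) (simp only: sem.simps; blast)+
next
  case (Box f)
  then have "polar X b f" by simp
  from Box.IH[OF this, of \<rho>] show ?case
    by (cases b) (simp only: sem.simps; blast)+
next
  case (Dia f)
  then have "polar X b f" by simp
  from Dia.IH[OF this, of \<rho>] show ?case
    by (cases b) (simp only: sem.simps; blast)+
next
  case (Var Y)
  with assms(2) show ?case
    by (cases "Y = X") simp_all
qed simp_all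

lemma mono_sem_positive:
  assumes "positive X \<psi>"
  shows "mono (\<lambda>A. sem M (\<rho>(X := A)) \<psi>)"
  by (rule monoI) (use sem_mono_polar[OF assms] in blast)

lemma sem_subset_worlds:
  assumes "ck_model M" "\<And>Y. Y \<in> free_vars \<psi> \<Longrightarrow> \<rho> Y \<subseteq> mW M"
  shows "sem M \<rho> \<psi> \<subseteq> mW M"
  using assms(2)
proof (induction \<psi> arbitrary: \<rho>)
  case (Mu X f)
  then have "sem M (\<rho>(X := mW M)) f \<subseteq> mW M"
    by (intro Mu.IH) auto
  then show ?case
    by (simp add: lfp_on_subset)
qed (use assms(1) in \<open>auto simp: ck_model_def gfp_on_subset\<close>)

locale monotone_on_subsets =
  fixes W :: "'a set" and G :: "'a set \<Rightarrow> 'a set"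
  assumes mono: "A \<subseteq> B \<Longrightarrow> G A \<subseteq> G B"
    and closed: "A \<subseteq> W \<Longrightarrow> G A \<subseteq> W"
begin

lemma lfp_on_lowerbound: "A \<subseteq> W \<Longrightarrow> G A \<subseteq> A \<Longrightarrow> lfp_on W G \<subseteq> A"
  unfolding lfp_on_def by blast

lemma gfp_on_upperbound: "A \<subseteq> W \<Longrightarrow> A \<subseteq> G A \<Longrightarrow> A \<subseteq> gfp_on W G"
  unfolding gfp_on_def by blast

lemma lfp_on_subset_W: "lfp_on W G \<subseteq> W"
  using closed[of W] lfp_on_subset[of G W] by blast

lemma lfp_on_unfold: "G (lfp_on W G) = lfp_on W G"
proof -
  have le: "G (lfp_on W G) \<subseteq> lfp_on W G"
    unfolding lfp_on_def
  proof (rule Inter_greatest)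
    fix A assume "A \<in> {A. A \<subseteq> W \<and> G A \<subseteq> A}"
    then have "\<Inter> {A. A \<subseteq> W \<and> G A \<subseteq> A} \<subseteq> A" "G A \<subseteq> A"
      by auto
    then show "G (\<Inter> {A. A \<subseteq> W \<and> G A \<subseteq> A}) \<subseteq> A"
      using mono by blast
  qed
  then have "lfp_on W G \<subseteq> G (lfp_on W G)"
    by (intro lfp_on_lowerbound closed mono lfp_on_subset_W)
  with le show ?thesis
    by (rule equalityI)
qed

lemma gfp_on_unfold: "G (gfp_on W G) = gfp_on W G"
proof -
  have le: "gfp_on W G \<subseteq> G (gfp_on W G)"
    unfolding gfp_on_def
  proof (rule Union_least)
    fix A assume "A \<in> {A. A \<subseteq> W \<and> A \<subseteq> G A}"
    then have "A \<subseteq> \<Union> {A. A \<subseteq> W \<and> A \<subseteq> G A}" "A \<subseteq> G A"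
      by auto
    then show "A \<subseteq> G (\<Union> {A. A \<subseteq> W \<and> A \<subseteq> G A})"
      using mono by blast
  qed
  then have "G (gfp_on W G) \<subseteq> gfp_on W G"
    by (intro gfp_on_upperbound closed mono gfp_on_subset)
  with le show ?thesis
    by (rule equalityI[rotated])
qed

end

section \<open>Ordinal approximants\<close>

definition lfp_approx :: "('o \<times> 'o) set \<Rightarrow> ('a set \<Rightarrow> 'a set) \<Rightarrow> 'o \<Rightarrow> 'a set" where
  "lfp_approx lt G = wfrec lt (\<lambda>f a. \<Union> {G (f b) | b. (b, a) \<in> lt})"

definition gfp_approx :: "('o \<times> 'o) set \<Rightarrow> 'a set \<Rightarrow> ('a set \<Rightarrow> 'a set) \<Rightarrow> 'o \<Rightarrow> 'a set" where
  "gfp_approx lt W G = wfrec lt (\<lambda>f a. W \<inter> \<Inter> {G (f b) | b. (b, a) \<in> lt})"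

lemma lfp_approx_unfold: "wf lt \<Longrightarrow> lfp_approx lt G a = \<Union> {G (lfp_approx lt G b) | b. (b, a) \<in> lt}"
  unfolding lfp_approx_def by (subst wfrec) (auto simp: cut_def)

lemma gfp_approx_unfold:
  "wf lt \<Longrightarrow> gfp_approx lt W G a = W \<inter> \<Inter> {G (gfp_approx lt W G b) | b. (b, a) \<in> lt}"
  unfolding gfp_approx_def by (subst wfrec) (auto simp: cut_def)

lemma lfp_approx_subset:
  assumes "wf lt" "\<And>A. A \<subseteq> W \<Longrightarrow> G A \<subseteq> W"
  shows "lfp_approx lt G a \<subseteq> W"
proof (induction a rule: wf_induct_rule[OF assms(1)])
  case (1 a)
  show ?case
    by (subst lfp_approx_unfold[OF assms(1)]) (use 1 assms(2) in blast)
qed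

lemma gfp_approx_subset: "wf lt \<Longrightarrow> gfp_approx lt W G a \<subseteq> W"
  by (subst gfp_approx_unfold) auto

text \<open>Approximants indexed by a well-order on a type that does not inject into \<^typ>\<open>'a set\<close>
  cannot all be distinct, so they reach the fixed point.\<close>

locale approximation = monotone_on_subsets W G
  for W :: "'a set" and G and lt :: "('o \<times> 'o) set" +
  assumes wf: "wf lt"
    and total: "a \<noteq> b \<Longrightarrow> (a, b) \<in> lt \<or> (b, a) \<in> lt"
    and not_inj: "\<not> inj (f :: 'o \<Rightarrow> 'a set)"
begin

lemma repetition: "\<exists>a a'. (a, a') \<in> lt \<and> f a = (f a' :: 'a set)"
  using not_inj[of f] total unfolding inj_def by metis

lemma lfp_approx_subset_lfp_on: "lfp_approx lt G a \<subseteq> lfp_on W G"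
proof (induction a rule: wf_induct_rule[OF wf])
  case (1 a)
  then have "G (lfp_approx lt G b) \<subseteq> lfp_on W G" if "(b, a) \<in> lt" for b
    using mono[OF 1[OF that]] by (simp add: lfp_on_unfold)
  then show ?case
    by (subst lfp_approx_unfold[OF wf]) blast
qed

lemma lfp_approx_stage: "v \<in> lfp_approx lt G a \<Longrightarrow> \<exists>b. (b, a) \<in> lt \<and> v \<in> G (lfp_approx lt G b)"
  using lfp_approx_unfold[OF wf, of G a] by auto

lemma lfp_on_stage:
  assumes "v \<in> lfp_on W G"
  shows "\<exists>b. v \<in> G (lfp_approx lt G b)"
proof -
  obtain a a' where a: "(a, a') \<in> lt" "lfp_approx lt G a = lfp_approx lt G a'"
    using repetition by blast
  then have "G (lfp_approx lt G a) \<subseteq> lfp_approx lt G a"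
    using lfp_approx_unfold[OF wf, of G a'] by blast
  moreover have "lfp_approx lt G a \<subseteq> W"
    using lfp_approx_subset_lfp_on lfp_on_subset_W by (rule subset_trans)
  ultimately have "lfp_on W G \<subseteq> lfp_approx lt G a"
    by (intro lfp_on_lowerbound)
  then show ?thesis
    using assms lfp_approx_stage by blast
qed

lemma gfp_on_subset_gfp_approx: "gfp_on W G \<subseteq> gfp_approx lt W G a"
proof (induction a rule: wf_induct_rule[OF wf])
  case (1 a)
  then have "gfp_on W G \<subseteq> G (gfp_approx lt W G b)" if "(b, a) \<in> lt" for b
    using mono[OF 1[OF that]] by (simp add: gfp_on_unfold)
  then show ?case
    by (subst gfp_approx_unfold[OF wf]) (use gfp_on_subset[of W G] in auto)
qed

lemma gfp_approx_stage:
  "v \<in> W \<Longrightarrow> v \<notin> gfp_approx lt W G a \<Longrightarrow> \<exists>b. (b, a) \<in> lt \<and> v \<notin> G (gfp_approx lt W G b)"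
  using gfp_approx_unfold[OF wf, of W G a] by auto

lemma gfp_on_stage:
  assumes "v \<in> W" "v \<notin> gfp_on W G"
  shows "\<exists>b. v \<notin> G (gfp_approx lt W G b)"
proof -
  obtain a a' where a: "(a, a') \<in> lt" "gfp_approx lt W G a = gfp_approx lt W G a'"
    using repetition by blast
  then have "gfp_approx lt W G a \<subseteq> G (gfp_approx lt W G a)"
    using gfp_approx_unfold[OF wf, of W G a'] by blast
  then have "gfp_approx lt W G a \<subseteq> gfp_on W G"
    by (intro gfp_on_upperbound gfp_approx_subset[OF wf])
  then show ?thesis
    using assms gfp_approx_stage by blast
qed

end

definition ordinal_order :: "('a set set \<times> 'a set set) set" where
  "ordinal_order = (SOME r. Well_order r \<and> Field r = UNIV)"

definition ordinal_less :: "('a set set \<times> 'a set set) set" where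
  "ordinal_less = ordinal_order - Id"

lemma ordinal_order:
  "Well_order (ordinal_order :: ('a set set \<times> 'a set set) set) \<and>
    Field (ordinal_order :: ('a set set \<times> 'a set set) set) = UNIV"
  unfolding ordinal_order_def using someI_ex[OF well_ordering] by blast

lemma ordinal_less:
  "wf ordinal_less" "trans ordinal_less" "a \<noteq> b \<Longrightarrow> (a, b) \<in> ordinal_less \<or> (b, a) \<in> ordinal_less"
proof -
  show "wf ordinal_less"
    using ordinal_order unfolding ordinal_less_def well_order_on_def by blast
  show "trans ordinal_less"
    using ordinal_order unfolding ordinal_less_def well_order_on_def linear_order_on_def
      partial_order_on_def preorder_on_def antisym_def trans_def by blast
  show "a \<noteq> b \<Longrightarrow> (a, b) \<in> ordinal_less \<or> (b, a) \<in> ordinal_less"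
    using ordinal_order unfolding ordinal_less_def well_order_on_def linear_order_on_def total_on_def
    by blast
qed

lemma not_inj_set_set: "\<not> inj (f :: 'a set set \<Rightarrow> 'a set)"
proof
  assume "inj f"
  then have "inv f ` (UNIV :: 'a set set) = Pow UNIV"
    by (auto simp: image_iff) (metis inv_f_f)
  then show False
    using Cantors_theorem by blast
qed

lemma approximation_ordinal_less:
  "monotone_on_subsets W G \<Longrightarrow> approximation W G (ordinal_less :: ('a set set \<times> 'a set set) set)"
  for W :: "'a set"
  by (intro approximation.intro approximation_axioms.intro ordinal_less(1,3) not_inj_set_set)

section \<open>Lexicographic order on lists\<close>

fun lex_less :: "('o \<times> 'o) set \<Rightarrow> 'o list \<Rightarrow> 'o list \<Rightarrow> bool" where
  "lex_less r (a # as) (b # bs) \<longleftrightarrow> (a, b) \<in> r \<or> (a = b \<and> lex_less r as bs)"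
| "lex_less r _ _ \<longleftrightarrow> False"

definition lex_le :: "('o \<times> 'o) set \<Rightarrow> 'o list \<Rightarrow> 'o list \<Rightarrow> bool" where
  "lex_le r as bs \<longleftrightarrow> as = bs \<or> lex_less r as bs"

lemma lex_less_trans: "trans r \<Longrightarrow> lex_less r as bs \<Longrightarrow> lex_less r bs cs \<Longrightarrow> lex_less r as cs"
proof (induction as arbitrary: bs cs)
  case (Cons a as)
  then obtain b bs' c cs' where "bs = b # bs'" "cs = c # cs'"
    by (metis lex_less.elims(2))
  with Cons show ?case
    by (auto dest: transD)
qed simp

lemma lex_le_trans: "trans r \<Longrightarrow> lex_le r as bs \<Longrightarrow> lex_le r bs cs \<Longrightarrow> lex_le r as cs"
  unfolding lex_le_def using lex_less_trans by blast

lemma lex_le_less_trans: "trans r \<Longrightarrow> lex_le r as bs \<Longrightarrow> lex_less r bs cs \<Longrightarrow> lex_less r as cs"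
  unfolding lex_le_def using lex_less_trans by blast

lemma lex_less_le_trans: "trans r \<Longrightarrow> lex_less r as bs \<Longrightarrow> lex_le r bs cs \<Longrightarrow> lex_less r as cs"
  unfolding lex_le_def using lex_less_trans by blast

lemma lex_less_total:
  assumes "\<And>a b. a \<noteq> b \<Longrightarrow> (a, b) \<in> r \<or> (b, a) \<in> r" "length as = length bs"
  shows "as = bs \<or> lex_less r as bs \<or> lex_less r bs as"
  using assms(2)
proof (induction as arbitrary: bs)
  case (Cons a as)
  then obtain b bs' where "bs = b # bs'"
    by (cases bs) auto
  with Cons.IH[of bs'] Cons.prems assms(1) show ?case
    by auto
qed simp

lemma lex_le_take: "lex_le r as bs \<Longrightarrow> lex_le r (take k as) (take k bs)"
proof (induction as arbitrary: bs k)
  case (Cons a as)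
  then show ?case
    by (cases k; cases bs) (auto simp: lex_le_def)
qed (simp add: lex_le_def)

lemma lex_less_snoc: "(x, y) \<in> r \<Longrightarrow> lex_less r (p @ [x]) (p @ [y])"
  by (induction p) auto

lemma lex_less_append_snoc:
  "lex_less r p q \<Longrightarrow> length p = length q \<Longrightarrow> lex_less r (p @ [x]) (q @ [y])"
proof (induction p arbitrary: q)
  case (Cons a p)
  then show ?case
    by (cases q) auto
qed simp

lemma lex_less_lexn: "lex_less r as bs \<Longrightarrow> length as = length bs \<Longrightarrow> (as, bs) \<in> lexn r (length as)"
proof (induction as arbitrary: bs)
  case (Cons a as)
  then obtain b bs' where b: "bs = b # bs'"
    by (cases bs) auto
  show ?case
  proof (cases "(a, b) \<in> r")
    case True
    then show ?thesis
      using b Cons.prems(2) unfolding lexn_conv by (auto intro!: exI[of _ "[]"])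
  next
    case False
    then have "a = b" "lex_less r as bs'"
      using Cons.prems b by auto
    then have "(as, bs') \<in> lexn r (length as)"
      using Cons.IH Cons.prems(2) b by simp
    then obtain xys x y xs' ys' where "as = xys @ x # xs'" "bs' = xys @ y # ys'" "(x, y) \<in> r"
      unfolding lexn_conv by blast
    then show ?thesis
      using Cons.prems(2) b \<open>a = b\<close> unfolding lexn_conv by (auto intro!: exI[of _ "a # xys"])
  qed
qed simp

lemma wf_lex_less: "wf r \<Longrightarrow> wf {(as, bs). length as = n \<and> length bs = n \<and> lex_less r as bs}"
  by (rule wf_subset[OF wf_lexn[of r n]]) (auto intro: lex_less_lexn)

lemma lex_least:
  assumes "wf r" "\<And>a b. a \<noteq> b \<Longrightarrow> (a, b) \<in> r \<or> (b, a) \<in> r"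
    and "z0 \<in> S" "\<And>z. z \<in> S \<Longrightarrow> length z = n"
  shows "\<exists>z\<in>S. \<forall>y\<in>S. lex_le r z y"
proof -
  have "\<exists>z\<in>S. \<forall>y. (y, z) \<in> {(as, bs). length as = n \<and> length bs = n \<and> lex_less r as bs} \<longrightarrow> y \<notin> S"
    using wf_lex_less[OF assms(1), of n] assms(3) unfolding wf_eq_minimal by blast
  then obtain z where z: "z \<in> S" "\<And>y. y \<in> S \<Longrightarrow> \<not> lex_less r y z"
    using assms(4) by blast
  have "lex_le r z y" if "y \<in> S" for y
    using lex_less_total[OF assms(2), of z y] assms(4) z that unfolding lex_le_def by auto
  with z(1) show ?thesis
    by blast
qed

section \<open>The evaluation game\<close>

fun pos_world :: "('w, 'p, 'v) gpos \<Rightarrow> 'w" where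
  "pos_world (GP v f Q) = v"
| "pos_world (GDia v f Q) = v"
| "pos_world (GImp v f g Q) = v"

fun pos_fm :: "('w, 'p, 'v) gpos \<Rightarrow> ('p, 'v) fm" where
  "pos_fm (GP v f Q) = f"
| "pos_fm (GDia v f Q) = Dia f"
| "pos_fm (GImp v f g Q) = Imp f g"

definition var_pos :: "('w, 'p, 'v) gpos \<Rightarrow> bool" where
  "var_pos p \<longleftrightarrow> (\<exists>X. pos_fm p = Var X)"

definition binder_pos :: "('w, 'p, 'v) gpos \<Rightarrow> bool" where
  "binder_pos p \<longleftrightarrow> (\<exists>Y. binds Y (pos_fm p))"

lemma Refuter_iff: "Q = Refuter \<longleftrightarrow> Q \<noteq> Verifier"
  by (cases Q) simp_all

lemma dual_eq_iff [simp]: "dual Q = Verifier \<longleftrightarrow> Q = Refuter" "dual Q = Refuter \<longleftrightarrow> Q = Verifier"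
  by (cases Q; simp)+

lemma binder_moves: "binds Y F \<Longrightarrow> moves M \<phi> (GP v F Q) = {GP v (body F) Q}"
  by (auto simp: binds_def)

lemma moves_Sub: "p' \<in> moves M \<phi> p \<Longrightarrow> \<not> var_pos p \<Longrightarrow> pos_fm p' \<in> Sub (pos_fm p)"
  by (cases p rule: pos_fm.cases; cases "pos_fm p") (auto simp: var_pos_def)

lemma moves_from_binder: "binds Y F \<Longrightarrow> pos_fm p = F \<Longrightarrow> p' \<in> moves M \<phi> p \<Longrightarrow> pos_fm p' = body F"
  by (cases p) (auto simp: binds_def)

fun pos_rank :: "('w, 'p, 'v) gpos \<Rightarrow> nat" where
  "pos_rank (GP v f Q) = 2 * size f + 1"
| "pos_rank (GDia v f Q) = 2 * size (Dia f)"
| "pos_rank (GImp v f g Q) = 2 * size (Imp f g)"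

lemma pos_rank_decreasing: "p' \<in> moves M \<phi> p \<Longrightarrow> \<not> var_pos p \<Longrightarrow> pos_rank p' < pos_rank p"
  by (cases p rule: pos_rank.cases; cases "pos_fm p") (auto simp: var_pos_def)

lemma owner_cases: "owner M \<phi> p = PI \<or> owner M \<phi> p = PII"
  by (cases "owner M \<phi> p") auto

lemma joint_play:
  assumes "strategy M \<phi> PI \<sigma>I" "strategy M \<phi> PII \<sigma>II"
  shows "(\<exists>r. inf_run M w \<phi> r \<and> inf_follows M \<phi> PI \<sigma>I r \<and> inf_follows M \<phi> PII \<sigma>II r) \<or>
    (\<exists>ps. fin_run M w \<phi> ps \<and> fin_follows M \<phi> PI \<sigma>I ps \<and> fin_follows M \<phi> PII \<sigma>II ps)"
proof -
  define next_pos where "next_pos p = (if owner M \<phi> p = PI then \<sigma>I p else \<sigma>II p)" for p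
  define r where "r n = (next_pos ^^ n) (init_pos w \<phi>)" for n
  have r_Suc: "r (Suc n) = next_pos (r n)" for n
    unfolding r_def by simp
  have next_pos_move: "next_pos p \<in> moves M \<phi> p" if "moves M \<phi> p \<noteq> {}" for p
    using assms that owner_cases[of M \<phi> p] unfolding strategy_def next_pos_def by auto
  have follows: "owner M \<phi> (r n) = PI \<longrightarrow> r (Suc n) = \<sigma>I (r n)" "owner M \<phi> (r n) = PII \<longrightarrow> r (Suc n) = \<sigma>II (r n)"
    for n
    unfolding r_Suc next_pos_def by auto
  show ?thesis
  proof (cases "\<exists>n. moves M \<phi> (r n) = {}")
    case False
    then have "inf_run M w \<phi> r"
      unfolding inf_run_def using next_pos_move r_Suc by (simp add: r_def)
    with follows show ?thesis
      unfolding inf_follows_def by blast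
  next
    case True
    define n where "n = (LEAST n. moves M \<phi> (r n) = {})"
    have n: "moves M \<phi> (r n) = {}"
      unfolding n_def by (rule LeastI_ex[OF True])
    have before: "moves M \<phi> (r i) \<noteq> {}" if "i < n" for i
      using not_less_Least[OF that[unfolded n_def]] .
    define ps where "ps = map r [0..<Suc n]"
    have len: "length ps = Suc n"
      unfolding ps_def by simp
    have nth: "ps ! i = r i" if "i < Suc n" for i
      using that unfolding ps_def by (simp del: upt_Suc)
    have "last ps = ps ! n"
      using len last_conv_nth[of ps] by fastforce
    then have "fin_run M w \<phi> ps"
      unfolding fin_run_def using len nth n r_Suc next_pos_move before
      by (auto simp: ps_def r_def hd_map simp del: upt_Suc)
    moreover have "fin_follows M \<phi> PI \<sigma>I ps" "fin_follows M \<phi> PII \<sigma>II ps"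
      unfolding fin_follows_def using nth len follows by auto
    ultimately show ?thesis
      by blast
  qed
qed

lemma not_both_winning: "winning_strategy M w \<phi> PI \<sigma>I \<Longrightarrow> winning_strategy M w \<phi> PII \<sigma>II \<Longrightarrow> False"
  using joint_play[of M \<phi> \<sigma>I \<sigma>II w] unfolding winning_strategy_def by (metis player.distinct(1))

locale evaluation_game = bounded_sentence \<phi>
  for M :: "('w, 'p) ck_struct" and w :: 'w and \<phi> :: "('p, 'v) fm" +
  assumes ck_model: "ck_model M" and world: "w \<in> mW M"
begin

abbreviation W :: "'w set" where
  "W \<equiv> mW M"

abbreviation reach :: "('w, 'p, 'v) gpos \<Rightarrow> bool" where
  "reach p \<equiv> reachable M w \<phi> p"

lemma le_worlds: "(u, v) \<in> mLe M \<Longrightarrow> u \<in> W \<and> v \<in> W"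
  using ck_model unfolding ck_model_def by blast

lemma R_worlds: "(u, v) \<in> mR M \<Longrightarrow> u \<in> W \<and> v \<in> W"
  using ck_model unfolding ck_model_def by blast

lemma reach_init: "reach (GP w \<phi> Verifier)"
  unfolding reachable_def init_pos_def by simp

lemma reach_step: "reach p \<Longrightarrow> p' \<in> moves M \<phi> p \<Longrightarrow> reach p'"
  unfolding reachable_def by (rule rtrancl_into_rtrancl) auto

text \<open>Player I holds the Verifier role exactly at the positive occurrences.\<close>

definition consistent :: "('w, 'p, 'v) gpos \<Rightarrow> bool" where
  "consistent p \<longleftrightarrow> pos_world p \<in> W \<and> occ_pol \<phi> (pos_fm p) (role_I p = Verifier)"

lemma Var_moves:
  assumes "consistent (GP v (Var X) Q)"
  shows "X \<in> vars" "moves M \<phi> (GP v (Var X) Q) = {GP v (binder_of X) Q}"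
proof -
  show X: "X \<in> vars"
    using assms occ_pol_Sub unfolding consistent_def vars_def by fastforce
  have "moves M \<phi> (GP v (Var X) Q) = {GP v F Q | F. F \<in> Sub \<phi> \<and> binds X F}"
    by (auto simp: binds_def)
  also have "\<dots> = {GP v (binder_of X) Q}"
    using binder_of[OF X] binder_eqI[OF X] by blast
  finally show "moves M \<phi> (GP v (Var X) Q) = {GP v (binder_of X) Q}" .
qed

lemma consistent_step:
  assumes "consistent p" "p' \<in> moves M \<phi> p"
  shows "consistent p'"
proof (cases p)
  case (GP v f Q)
  show ?thesis
  proof (cases f)
    case (Var X)
    with assms(1) GP have cons: "consistent (GP v (Var X) Q)"
      by simp
    have X: "X \<in> vars" and p': "p' = GP v (binder_of X) Q"
      using Var_moves[OF cons] assms(2) unfolding GP Var by auto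
    obtain c where c: "occ_pol \<phi> (binder_of X) c"
      using Sub_imp_occ_pol binder_of(1)[OF X] by blast
    moreover have "c = (Q = Verifier)"
      using Var_polarity[OF _ c] assms(1) GP Var unfolding consistent_def by auto
    ultimately show ?thesis
      using assms(1) GP p' unfolding consistent_def by simp
  qed (use assms GP in \<open>auto simp: consistent_def dest: le_worlds R_worlds occ_pol_children\<close>)
qed (use assms in \<open>auto simp: consistent_def Refuter_iff dest: le_worlds R_worlds occ_pol_children\<close>)

lemma reach_consistent: "reach p \<Longrightarrow> consistent p"
  unfolding reachable_def
proof (induction rule: rtrancl_induct)
  case base
  then show ?case
    using world occ_pol_self unfolding consistent_def init_pos_def by auto
next
  case (step p p')
  then show ?case
    using consistent_step by auto
qed

lemma reach_Sub: "reach p \<Longrightarrow> pos_fm p \<in> Sub \<phi>"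
  using reach_consistent occ_pol_Sub unfolding consistent_def by blast

lemma reach_Var:
  assumes "reach (GP v (Var X) Q)"
  shows "X \<in> vars" "moves M \<phi> (GP v (Var X) Q) = {GP v (binder_of X) Q}" "reach (GP v (binder_of X) Q)"
  using Var_moves[OF reach_consistent[OF assms]] reach_step[OF assms] by auto

lemma binder_role_unique:
  assumes "X \<in> vars" "reach (GP v (binder_of X) Q)" "reach (GP v' (binder_of X) Q')"
  shows "Q = Q'"
  using reach_consistent[OF assms(2)] reach_consistent[OF assms(3)] binder_polarity_unique[OF assms(1)]
  unfolding consistent_def by (cases Q; cases Q') auto

end

section \<open>Signatures and the signature strategy\<close>

locale player_game = evaluation_game M w \<phi> for M :: "('w, 'p) ck_struct" and w and \<phi> :: "('p, 'v) fm" +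
  fixes P :: player
begin

definition role_of :: "role \<Rightarrow> role" where
  "role_of Q = (if P = PI then Q else dual Q)"

abbreviation mu_var :: "'v \<Rightarrow> bool" where
  "mu_var Z \<equiv> binder_of Z = Mu Z (body (binder_of Z))"

text \<open>The fixed points that \<open>P\<close> must justify by a well-founded argument: the least fixed points
  \<open>P\<close> verifies and the greatest fixed points \<open>P\<close> refutes.\<close>

definition adverse :: "'v \<Rightarrow> bool" where
  "adverse X \<longleftrightarrow> X \<in> vars \<and> (\<exists>v Q. reach (GP v (binder_of X) Q) \<and>
     (if mu_var X then role_of Q = Verifier else role_of Q = Refuter))"

abbreviation lt :: "('w set set \<times> 'w set set) set" where
  "lt \<equiv> ordinal_less"

definition unfold_fun :: "'v \<Rightarrow> ('v \<Rightarrow> 'w set) \<Rightarrow> 'w set \<Rightarrow> 'w set" where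
  "unfold_fun X \<rho> A = sem M (\<rho>(X := A)) (body (binder_of X))"

definition sig_env_step :: "('v \<Rightarrow> 'w set set) \<Rightarrow> ('v \<Rightarrow> 'w set) \<Rightarrow> 'v \<Rightarrow> 'w set" where
  "sig_env_step \<kappa> \<rho> Z =
    (if adverse Z then
       if mu_var Z then lfp_approx lt (unfold_fun Z \<rho>) (\<kappa> Z) else gfp_approx lt W (unfold_fun Z \<rho>) (\<kappa> Z)
     else sem M \<rho> (binder_of Z))"

text \<open>The recursion runs from outer to inner binders, as the free variables of a binder are bound by
  larger binders.\<close>

function sig_env :: "('v \<Rightarrow> 'w set set) \<Rightarrow> 'v \<Rightarrow> 'w set" where
  "sig_env \<kappa> Z = sig_env_step \<kappa>
     (\<lambda>Y. if Y \<in> free_vars (binder_of Z) \<and> size (binder_of Z) < size (binder_of Y) \<and> size (binder_of Y) \<le> size \<phi>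
          then sig_env \<kappa> Y else {}) Z"
  by auto
termination
  by (relation "measure (\<lambda>(\<kappa>, Z). Suc (size \<phi>) - size (binder_of Z))") auto

declare sig_env.simps [simp del]

lemma unfold_fun_cong:
  assumes "Z \<in> vars" "\<And>Y. Y \<in> free_vars (binder_of Z) \<Longrightarrow> \<rho> Y = \<rho>' Y"
  shows "unfold_fun Z \<rho> = unfold_fun Z \<rho>'"
proof
  fix A
  show "unfold_fun Z \<rho> A = unfold_fun Z \<rho>' A"
    unfolding unfold_fun_def
    by (rule sem_cong) (use assms free_vars_body[OF binder_of(2)[OF assms(1)]] in auto)
qed

lemma sig_env_step_cong:
  assumes "Z \<in> vars" "\<And>Y. Y \<in> free_vars (binder_of Z) \<Longrightarrow> \<rho> Y = \<rho>' Y"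
  shows "sig_env_step \<kappa> \<rho> Z = sig_env_step \<kappa> \<rho>' Z"
  unfolding sig_env_step_def using unfold_fun_cong[OF assms] sem_cong[of "binder_of Z" \<rho> \<rho>' M] assms(2)
  by simp

lemma sig_env_unfold:
  assumes "Z \<in> vars"
  shows "sig_env \<kappa> Z = sig_env_step \<kappa> (sig_env \<kappa>) Z"
proof -
  have "size (binder_of Y) \<le> size \<phi>" if "Y \<in> vars" for Y
    using size_le_if_Sub binder_of(1)[OF that] .
  then show ?thesis
    by (subst sig_env.simps) (rule sig_env_step_cong[OF assms], use size_binder_less_if_free[OF assms] in auto)
qed

lemma sig_env_subset: "sig_env \<kappa> Z \<subseteq> W"
proof (induction \<kappa> Z rule: sig_env.induct)
  case (1 \<kappa> Z)
  let ?\<rho> = "\<lambda>Y. if Y \<in> free_vars (binder_of Z) \<and> size (binder_of Z) < size (binder_of Y) \<and> size (binder_of Y) \<le> size \<phi>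
          then sig_env \<kappa> Y else {}"
  have \<rho>: "?\<rho> Y \<subseteq> W" for Y
    using 1 by auto
  then have "unfold_fun Z ?\<rho> A \<subseteq> W" if "A \<subseteq> W" for A
    unfolding unfold_fun_def by (intro sem_subset_worlds[OF ck_model]) (use that in auto)
  then have "lfp_approx lt (unfold_fun Z ?\<rho>) (\<kappa> Z) \<subseteq> W"
    by (intro lfp_approx_subset ordinal_less(1))
  moreover have "sem M ?\<rho> (binder_of Z) \<subseteq> W"
    using \<rho> by (intro sem_subset_worlds[OF ck_model])
  ultimately show ?case
    by (subst sig_env.simps) (simp add: sig_env_step_def gfp_approx_subset[OF ordinal_less(1)])
qed

lemma sem_sig_env_subset: "sem M (sig_env \<kappa>) f \<subseteq> W"
  by (rule sem_subset_worlds[OF ck_model sig_env_subset])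

lemma sig_env_cong:
  assumes "\<And>Z'. Z' \<in> vars \<Longrightarrow> s \<le> size (binder_of Z') \<Longrightarrow> \<kappa> Z' = \<kappa>' Z'"
  shows "Z \<in> vars \<Longrightarrow> s \<le> size (binder_of Z) \<Longrightarrow> sig_env \<kappa> Z = sig_env \<kappa>' Z"
proof (induction "Suc (size \<phi>) - size (binder_of Z)" arbitrary: Z rule: less_induct)
  case less
  have "sig_env \<kappa> Y = sig_env \<kappa>' Y" if "Y \<in> free_vars (binder_of Z)" for Y
  proof -
    have "Y \<in> vars" "size (binder_of Z) < size (binder_of Y)"
      using size_binder_less_if_free[OF less(2) that] by auto
    moreover have "size (binder_of Y) \<le> size \<phi>"
      using size_le_if_Sub binder_of(1)[OF \<open>Y \<in> vars\<close>] .
    ultimately show ?thesis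
      using less by auto
  qed
  then have "sig_env \<kappa> Z = sig_env_step \<kappa> (sig_env \<kappa>') Z"
    using sig_env_unfold[OF less(2)] sig_env_step_cong[OF less(2)] by metis
  also have "\<dots> = sig_env_step \<kappa>' (sig_env \<kappa>') Z"
    using assms[OF less(2,3)] unfolding sig_env_step_def by simp
  also have "\<dots> = sig_env \<kappa>' Z"
    using sig_env_unfold[OF less(2)] by simp
  finally show ?case .
qed

lemma unfold_fun_outer_cong:
  assumes "Y \<in> vars" "\<And>Z. Z \<in> vars \<Longrightarrow> size (binder_of Y) < size (binder_of Z) \<Longrightarrow> \<kappa>' Z = \<kappa> Z"
  shows "unfold_fun Y (sig_env \<kappa>') = unfold_fun Y (sig_env \<kappa>)"
proof (rule unfold_fun_cong[OF assms(1)])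
  fix Z assume "Z \<in> free_vars (binder_of Y)"
  then have "Z \<in> vars" "size (binder_of Y) < size (binder_of Z)"
    using size_binder_less_if_free[OF assms(1)] by auto
  then show "sig_env \<kappa>' Z = sig_env \<kappa> Z"
    using sig_env_cong[of "Suc (size (binder_of Y))" \<kappa>' \<kappa> Z] assms(2) by auto
qed

lemma approximation_unfold_fun:
  assumes "Z \<in> vars"
  shows "approximation W (unfold_fun Z (sig_env \<kappa>)) lt"
proof (intro approximation_ordinal_less monotone_on_subsets.intro)
  show "unfold_fun Z (sig_env \<kappa>) A \<subseteq> unfold_fun Z (sig_env \<kappa>) B" if "A \<subseteq> B" for A B
    unfolding unfold_fun_def using monoD[OF mono_sem_positive[OF positive_body[OF assms]] that] .
  show "unfold_fun Z (sig_env \<kappa>) A \<subseteq> W" if "A \<subseteq> W" for A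
    unfolding unfold_fun_def by (rule sem_subset_worlds[OF ck_model]) (use that sig_env_subset in auto)
qed

lemma sem_binder_mu:
  assumes "mu_var Z"
  shows "sem M \<rho> (binder_of Z) = lfp_on W (unfold_fun Z \<rho>)"
proof -
  obtain g where "binder_of Z = Mu Z g"
    using assms by blast
  then show ?thesis
    unfolding unfold_fun_def by simp
qed

lemma sem_binder_nu:
  assumes "Z \<in> vars" "\<not> mu_var Z"
  shows "sem M \<rho> (binder_of Z) = gfp_on W (unfold_fun Z \<rho>)"
proof -
  obtain g where "binder_of Z = Nu Z g"
    using binder_of(2)[OF assms(1)] assms(2) by (auto simp: binds_def)
  then show ?thesis
    unfolding unfold_fun_def by simp
qed

lemma sig_env_not_adverse: "Z \<in> vars \<Longrightarrow> \<not> adverse Z \<Longrightarrow> sig_env \<kappa> Z = sem M (sig_env \<kappa>) (binder_of Z)"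
  using sig_env_unfold unfolding sig_env_step_def by simp

lemma sig_env_adverse_mu:
  "Z \<in> vars \<Longrightarrow> adverse Z \<Longrightarrow> mu_var Z \<Longrightarrow> sig_env \<kappa> Z = lfp_approx lt (unfold_fun Z (sig_env \<kappa>)) (\<kappa> Z)"
  using sig_env_unfold unfolding sig_env_step_def by simp

lemma sig_env_adverse_nu:
  "Z \<in> vars \<Longrightarrow> adverse Z \<Longrightarrow> \<not> mu_var Z \<Longrightarrow> sig_env \<kappa> Z = gfp_approx lt W (unfold_fun Z (sig_env \<kappa>)) (\<kappa> Z)"
  using sig_env_unfold unfolding sig_env_step_def by simp

lemma sem_body: "sem M (sig_env \<kappa>) (body (binder_of Z)) = unfold_fun Z (sig_env \<kappa>) (sig_env \<kappa> Z)"
  unfolding unfold_fun_def by simp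


fun wins_under :: "('v \<Rightarrow> 'w set set) \<Rightarrow> ('w, 'p, 'v) gpos \<Rightarrow> bool" where
  "wins_under \<kappa> (GP v f Q) \<longleftrightarrow> v \<in> W \<and> (role_of Q = Verifier \<longleftrightarrow> v \<in> sem M (sig_env \<kappa>) f)"
| "wins_under \<kappa> (GDia v f Q) \<longleftrightarrow>
     v \<in> W \<and> (role_of Q = Verifier \<longleftrightarrow> (\<exists>u. (v, u) \<in> mR M \<and> u \<in> sem M (sig_env \<kappa>) f))"
| "wins_under \<kappa> (GImp v f g Q) \<longleftrightarrow>
     v \<in> W \<and> (role_of Q = Verifier \<longleftrightarrow> v \<notin> sem M (sig_env \<kappa>) f \<or> v \<in> sem M (sig_env \<kappa>) g)"

lemma role_of_dual: "role_of (dual Q) = dual (role_of Q)"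
  unfolding role_of_def by (cases Q) auto

lemma owner_eq_iff: "owner M \<phi> p = P \<longleftrightarrow> owner_role M \<phi> p = role_of (role_I p)"
  unfolding owner_def role_of_def by (cases P; cases "owner_role M \<phi> p"; cases "role_I p") auto

lemma owner_eq_simps:
  "owner M \<phi> (GP v (Prop A) Q) = P \<longleftrightarrow> (if v \<in> mV M A then Refuter else Verifier) = role_of Q"
  "owner M \<phi> (GP v Bot Q) = P \<longleftrightarrow> (if v \<in> mWb M then Refuter else Verifier) = role_of Q"
  "owner M \<phi> (GP v (And f g) Q) = P \<longleftrightarrow> role_of Q = Refuter"
  "owner M \<phi> (GP v (Or f g) Q) = P \<longleftrightarrow> role_of Q = Verifier"
  "owner M \<phi> (GP v (Imp f g) Q) = P \<longleftrightarrow> role_of Q = Refuter"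
  "owner M \<phi> (GP v (Box f) Q) = P \<longleftrightarrow> role_of Q = Refuter"
  "owner M \<phi> (GP v (Dia f) Q) = P \<longleftrightarrow> role_of Q = Refuter"
  "owner M \<phi> (GDia v f Q) = P \<longleftrightarrow> role_of Q = Verifier"
  "owner M \<phi> (GImp v f g Q) = P \<longleftrightarrow> role_of Q = Verifier"
  by (auto simp: owner_eq_iff)

lemma opponent_moves_win:
  assumes "wins_under \<kappa> p" "owner M \<phi> p \<noteq> P" "\<not> var_pos p" "\<not> binder_pos p" "p' \<in> moves M \<phi> p"
  shows "wins_under \<kappa> p'"
proof (cases p)
  case (GP v f Q)
  show ?thesis
  proof (cases f)
    case (Box g)
    with assms GP have "role_of Q = Verifier"
      by (cases "role_of Q") (simp_all add: owner_eq_simps)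
    moreover obtain u where "p' = GP u g Q" "(v, u) \<in> mLe M O mR M"
      using assms(5) GP Box by auto
    ultimately show ?thesis
      using assms(1) GP Box R_worlds by auto
  qed (use assms GP in \<open>(cases "role_of Q"; auto simp: owner_eq_simps var_pos_def binder_pos_def dest: le_worlds)+\<close>)
next
  case (GDia v f Q)
  with assms show ?thesis
    by (cases "role_of Q") (auto simp: owner_eq_simps dest: R_worlds)
next
  case (GImp v f g Q)
  with assms show ?thesis
    by (cases "role_of Q") (auto simp: owner_eq_simps role_of_dual)
qed

lemma own_move_wins:
  assumes "wins_under \<kappa> p" "owner M \<phi> p = P" "\<not> var_pos p" "\<not> binder_pos p"
  shows "\<exists>p' \<in> moves M \<phi> p. wins_under \<kappa> p'"
proof (cases p)
  case (GP v f Q)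
  show ?thesis
  proof (cases f)
    case (Imp f1 f2)
    with assms GP have "role_of Q = Refuter" "v \<in> W" "v \<notin> sem M (sig_env \<kappa>) (Imp f1 f2)"
      by (auto simp: owner_eq_simps)
    then obtain u where "(v, u) \<in> mLe M" "u \<in> sem M (sig_env \<kappa>) f1" "u \<notin> sem M (sig_env \<kappa>) f2"
      by auto
    with \<open>role_of Q = Refuter\<close> GP Imp show ?thesis
      using le_worlds by (intro bexI[of _ "GImp u f1 f2 Q"]) auto
  next
    case (Box g)
    with assms GP have "role_of Q = Refuter" "v \<in> W" "v \<notin> sem M (sig_env \<kappa>) (Box g)"
      by (auto simp: owner_eq_simps)
    then obtain u where "(v, u) \<in> mLe M O mR M" "u \<notin> sem M (sig_env \<kappa>) g"
      by auto
    with \<open>role_of Q = Refuter\<close> GP Box show ?thesis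
      using R_worlds by (intro bexI[of _ "GP u g Q"]) auto
  next
    case (Dia g)
    with assms GP have "role_of Q = Refuter" "v \<in> W" "v \<notin> sem M (sig_env \<kappa>) (Dia g)"
      by (auto simp: owner_eq_simps)
    then obtain u where "(v, u) \<in> mLe M" "\<not> (\<exists>x. (u, x) \<in> mR M \<and> x \<in> sem M (sig_env \<kappa>) g)"
      by auto
    with \<open>role_of Q = Refuter\<close> GP Dia show ?thesis
      using le_worlds by (intro bexI[of _ "GDia u g Q"]) auto
  qed (use assms GP in \<open>(cases "role_of Q"; auto simp: owner_eq_simps var_pos_def binder_pos_def split: if_splits)+\<close>)
next
  case (GDia v f Q)
  with assms obtain u where "role_of Q = Verifier" "(v, u) \<in> mR M" "u \<in> sem M (sig_env \<kappa>) f"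
    by (auto simp: owner_eq_simps)
  with GDia show ?thesis
    using R_worlds by (intro bexI[of _ "GP u f Q"]) auto
next
  case (GImp v f g Q)
  with assms show ?thesis
    by (cases "role_of Q") (auto simp: owner_eq_simps role_of_dual)
qed

lemma adverse_role:
  assumes "adverse X" "reach (GP v (binder_of X) Q)"
  shows "role_of Q = (if mu_var X then Verifier else Refuter)"
proof -
  obtain v' Q' where "X \<in> vars" "reach (GP v' (binder_of X) Q')"
    "if mu_var X then role_of Q' = Verifier else role_of Q' = Refuter"
    using assms(1) unfolding adverse_def by blast
  moreover have "Q' = Q"
    using binder_role_unique calculation(1,2) assms(2) .
  ultimately show ?thesis
    by (simp split: if_splits)
qed

lemma wins_under_regenerate:
  assumes "reach (GP v (Var X) Q)" "wins_under \<kappa> (GP v (Var X) Q)"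
  shows "wins_under \<kappa> (GP v (binder_of X) Q)"
proof -
  have X: "X \<in> vars" and reach_binder: "reach (GP v (binder_of X) Q)"
    using reach_Var[OF assms(1)] by auto
  interpret approximation W "unfold_fun X (sig_env \<kappa>)" lt
    using approximation_unfold_fun[OF X] .
  show ?thesis
  proof (cases "adverse X")
    case False
    then show ?thesis
      using assms(2) sig_env_not_adverse[OF X] by simp
  next
    case True
    note role = adverse_role[OF True reach_binder]
    show ?thesis
    proof (cases "mu_var X")
      case True
      then have "v \<in> lfp_approx lt (unfold_fun X (sig_env \<kappa>)) (\<kappa> X)"
        using assms(2) role sig_env_adverse_mu[OF X \<open>adverse X\<close>] by simp
      then show ?thesis
        using lfp_approx_subset_lfp_on sem_binder_mu[OF True] assms(2) role True by auto
    next
      case False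
      then have "v \<in> W" "v \<notin> gfp_approx lt W (unfold_fun X (sig_env \<kappa>)) (\<kappa> X)"
        using assms(2) role sig_env_adverse_nu[OF X \<open>adverse X\<close>] by auto
      then show ?thesis
        using gfp_on_subset_gfp_approx sem_binder_nu[OF X False] role False by auto
    qed
  qed
qed

lemma sem_body_not_adverse:
  assumes "Y \<in> vars" "\<not> adverse Y"
  shows "sem M (sig_env \<kappa>) (body (binder_of Y)) = sem M (sig_env \<kappa>) (binder_of Y)"
proof -
  interpret approximation W "unfold_fun Y (sig_env \<kappa>)" lt
    using approximation_unfold_fun[OF assms(1)] .
  show ?thesis
    using sem_body sig_env_not_adverse[OF assms] sem_binder_mu sem_binder_nu[OF assms(1)]
      lfp_on_unfold gfp_on_unfold by (cases "mu_var Y") simp_all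
qed

lemma wins_under_unfold_adverse:
  assumes "reach (GP v (binder_of Y) Q)" "adverse Y" "wins_under \<kappa> (GP v (binder_of Y) Q)"
  shows "\<exists>\<beta>. wins_under (\<kappa>(Y := \<beta>)) (GP v (body (binder_of Y)) Q)"
proof -
  have Y: "Y \<in> vars"
    using assms(2) unfolding adverse_def by blast
  interpret approximation W "unfold_fun Y (sig_env \<kappa>)" lt
    using approximation_unfold_fun[OF Y] .
  note role = adverse_role[OF assms(2,1)]
  have same_fun: "unfold_fun Y (sig_env (\<kappa>(Y := \<beta>))) = unfold_fun Y (sig_env \<kappa>)" for \<beta>
    by (rule unfold_fun_outer_cong[OF Y]) auto
  show ?thesis
  proof (cases "mu_var Y")
    case True
    then have "v \<in> lfp_on W (unfold_fun Y (sig_env \<kappa>))"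
      using assms(3) role sem_binder_mu by simp
    then obtain \<beta> where "v \<in> unfold_fun Y (sig_env \<kappa>) (lfp_approx lt (unfold_fun Y (sig_env \<kappa>)) \<beta>)"
      using lfp_on_stage by blast
    then show ?thesis
      using assms(3) role True sem_body same_fun sig_env_adverse_mu[OF Y assms(2) True] by auto
  next
    case False
    then have "v \<in> W" "v \<notin> gfp_on W (unfold_fun Y (sig_env \<kappa>))"
      using assms(3) role sem_binder_nu[OF Y] by auto
    then obtain \<beta> where "v \<notin> unfold_fun Y (sig_env \<kappa>) (gfp_approx lt W (unfold_fun Y (sig_env \<kappa>)) \<beta>)"
      using gfp_on_stage by blast
    then show ?thesis
      using \<open>v \<in> W\<close> role False sem_body same_fun sig_env_adverse_nu[OF Y assms(2) False] by auto
  qed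
qed

lemma wins_under_unfold:
  assumes "reach (GP v F Q)" "binds Y F" "wins_under \<kappa> (GP v F Q)"
  shows "\<exists>\<beta>. wins_under (\<kappa>(Y := \<beta>)) (GP v (body F) Q)"
proof (cases "Y \<in> vars")
  case False
  obtain g where g: "F = Mu Y g \<or> F = Nu Y g"
    using assms(2) unfolding binds_def by blast
  have "Y \<notin> free_vars g"
  proof
    assume "Y \<in> free_vars g"
    then have "Var Y \<in> Sub F"
      using g Var_Sub_if_free by auto
    then show False
      using False vars_Sub[OF reach_Sub[OF assms(1)]] by simp
  qed
  with g have "sem M (sig_env \<kappa>) F = sem M (sig_env \<kappa>) (body F)"
    using sem_vacuous_fixpoint[OF _ sem_sig_env_subset] by auto
  with assms(3) show ?thesis
    by (intro exI[of _ "\<kappa> Y"]) simp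
next
  case True
  then have "F = binder_of Y"
    using binder_eqI[OF _ assms(2)] reach_Sub[OF assms(1)] by simp
  with True assms show ?thesis
    using sem_body_not_adverse wins_under_unfold_adverse by (cases "adverse Y") (auto intro: exI[of _ "\<kappa> Y"])
qed

abbreviation agree_outside :: "'v \<Rightarrow> ('v \<Rightarrow> 'w set set) \<Rightarrow> ('v \<Rightarrow> 'w set set) \<Rightarrow> bool" where
  "agree_outside X \<kappa>' \<kappa> \<equiv> \<forall>Z\<in>vars. size (binder_of X) < size (binder_of Z) \<longrightarrow> \<kappa>' Z = \<kappa> Z"

lemma wins_under_adverse_cycle:
  assumes "reach (GP v (Var X) Q)" "adverse X" "wins_under \<kappa> (GP v (Var X) Q)"
  shows "\<exists>\<beta>. (\<beta>, \<kappa> X) \<in> lt \<and>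
    (\<forall>\<kappa>'. agree_outside X \<kappa>' \<kappa> \<longrightarrow> wins_under (\<kappa>'(X := \<beta>)) (GP v (body (binder_of X)) Q))"
proof -
  have X: "X \<in> vars" and reach_binder: "reach (GP v (binder_of X) Q)"
    using reach_Var[OF assms(1)] by auto
  interpret approximation W "unfold_fun X (sig_env \<kappa>)" lt
    using approximation_unfold_fun[OF X] .
  have v: "v \<in> W"
    using assms(3) by simp
  note role = adverse_role[OF assms(2) reach_binder]
  have same_fun: "unfold_fun X (sig_env (\<kappa>'(X := \<beta>))) = unfold_fun X (sig_env \<kappa>)"
    if "agree_outside X \<kappa>' \<kappa>" for \<kappa>' \<beta>
    by (rule unfold_fun_outer_cong[OF X]) (use that in auto)
  show ?thesis
  proof (cases "mu_var X")
    case True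
    then have "v \<in> lfp_approx lt (unfold_fun X (sig_env \<kappa>)) (\<kappa> X)"
      using assms(3) role sig_env_adverse_mu[OF X assms(2)] by simp
    then obtain \<beta> where "(\<beta>, \<kappa> X) \<in> lt" "v \<in> unfold_fun X (sig_env \<kappa>) (lfp_approx lt (unfold_fun X (sig_env \<kappa>)) \<beta>)"
      using lfp_approx_stage by blast
    with v role True show ?thesis
      using same_fun sem_body sig_env_adverse_mu[OF X assms(2) True] by (intro exI[of _ \<beta>]) auto
  next
    case False
    then have "v \<notin> gfp_approx lt W (unfold_fun X (sig_env \<kappa>)) (\<kappa> X)"
      using assms(3) role sig_env_adverse_nu[OF X assms(2)] by simp
    then obtain \<beta> where "(\<beta>, \<kappa> X) \<in> lt" "v \<notin> unfold_fun X (sig_env \<kappa>) (gfp_approx lt W (unfold_fun X (sig_env \<kappa>)) \<beta>)"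
      using gfp_approx_stage v by blast
    with v role False show ?thesis
      using same_fun sem_body sig_env_adverse_nu[OF X assms(2) False] by (intro exI[of _ \<beta>]) auto
  qed
qed


text \<open>Signatures are compared lexicographically along this list, which puts outer variables first.\<close>

definition var_list :: "'v list" where
  "var_list = sort_key (\<lambda>Y. size \<phi> - size (binder_of Y)) (SOME l. set l = vars \<and> distinct l)"

lemma var_list: "set var_list = vars" "distinct var_list"
proof -
  have "\<exists>l. set l = vars \<and> distinct l"
    using finite_distinct_list[OF finite_vars] by blast
  from someI_ex[OF this] show "set var_list = vars" "distinct var_list"
    unfolding var_list_def by simp_all
qed

lemma var_list_outer_first:
  assumes "i < length var_list" "j < length var_list"
    and "size (binder_of (var_list ! j)) < size (binder_of (var_list ! i))"
  shows "i < j"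
proof (rule ccontr)
  assume "\<not> i < j"
  then have "size \<phi> - size (binder_of (var_list ! j)) \<le> size \<phi> - size (binder_of (var_list ! i))"
    using sorted_nth_mono[of "map (\<lambda>Y. size \<phi> - size (binder_of Y)) var_list" j i] assms(1,2)
    unfolding var_list_def by simp
  moreover have "size (binder_of (var_list ! i)) \<le> size \<phi>"
    using assms(1) var_list(1) nth_mem size_le_if_Sub binder_of(1) by metis
  ultimately show False
    using assms(3) by linarith
qed

definition sig_list :: "('v \<Rightarrow> 'w set set) \<Rightarrow> 'w set set list" where
  "sig_list \<kappa> = map \<kappa> var_list"

lemma length_sig_list [simp]: "length (sig_list \<kappa>) = length var_list"
  unfolding sig_list_def by simp

abbreviation winnable :: "('w, 'p, 'v) gpos \<Rightarrow> bool" where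
  "winnable p \<equiv> \<exists>\<kappa>. wins_under \<kappa> p"

definition least_sig :: "('w, 'p, 'v) gpos \<Rightarrow> 'v \<Rightarrow> 'w set set" where
  "least_sig p = (SOME \<kappa>. wins_under \<kappa> p \<and> (\<forall>\<kappa>'. wins_under \<kappa>' p \<longrightarrow> lex_le lt (sig_list \<kappa>) (sig_list \<kappa>')))"

lemma least_sig:
  assumes "wins_under \<kappa> p"
  shows "wins_under (least_sig p) p" "lex_le lt (sig_list (least_sig p)) (sig_list \<kappa>)"
proof -
  have "\<exists>s\<in>sig_list ` {\<kappa>. wins_under \<kappa> p}. \<forall>s'\<in>sig_list ` {\<kappa>. wins_under \<kappa> p}. lex_le lt s s'"
    by (rule lex_least[OF ordinal_less(1,3)]) (use assms in auto)
  then have "\<exists>\<kappa>. wins_under \<kappa> p \<and> (\<forall>\<kappa>'. wins_under \<kappa>' p \<longrightarrow> lex_le lt (sig_list \<kappa>) (sig_list \<kappa>'))"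
    by blast
  from someI_ex[OF this] assms
  show "wins_under (least_sig p) p" "lex_le lt (sig_list (least_sig p)) (sig_list \<kappa>)"
    unfolding least_sig_def[symmetric] by auto
qed

definition strat :: "('w, 'p, 'v) gpos \<Rightarrow> ('w, 'p, 'v) gpos" where
  "strat p = (if \<exists>p' \<in> moves M \<phi> p. winnable p'
     then SOME p'. p' \<in> moves M \<phi> p \<and> winnable p' \<and>
       (\<forall>p'' \<in> moves M \<phi> p. winnable p'' \<longrightarrow> lex_le lt (sig_list (least_sig p')) (sig_list (least_sig p'')))
     else SOME p'. p' \<in> moves M \<phi> p)"

lemma strat_least:
  assumes "p'' \<in> moves M \<phi> p" "winnable p''"
  shows "strat p \<in> moves M \<phi> p" "winnable (strat p)"
    "lex_le lt (sig_list (least_sig (strat p))) (sig_list (least_sig p''))"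
proof -
  have "\<exists>s\<in>(\<lambda>p'. sig_list (least_sig p')) ` {p' \<in> moves M \<phi> p. winnable p'}.
      \<forall>s'\<in>(\<lambda>p'. sig_list (least_sig p')) ` {p' \<in> moves M \<phi> p. winnable p'}. lex_le lt s s'"
    by (rule lex_least[OF ordinal_less(1,3)]) (use assms in auto)
  then have "\<exists>p'. p' \<in> moves M \<phi> p \<and> winnable p' \<and>
      (\<forall>p'' \<in> moves M \<phi> p. winnable p'' \<longrightarrow> lex_le lt (sig_list (least_sig p')) (sig_list (least_sig p'')))"
    by blast
  from someI_ex[OF this] assms
  show "strat p \<in> moves M \<phi> p" "winnable (strat p)"
    "lex_le lt (sig_list (least_sig (strat p))) (sig_list (least_sig p''))"
    unfolding strat_def by auto
qed

lemma strat_move: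
  assumes "moves M \<phi> p \<noteq> {}"
  shows "strat p \<in> moves M \<phi> p"
proof (cases "\<exists>p' \<in> moves M \<phi> p. winnable p'")
  case True
  then show ?thesis
    using strat_least(1) by blast
next
  case False
  then show ?thesis
    unfolding strat_def using assms some_in_eq by auto
qed

lemma strategy_strat: "strategy M \<phi> P strat"
  unfolding strategy_def using strat_move by blast

lemma dead_end_lost:
  assumes "reach p" "wins_under \<kappa> p" "moves M \<phi> p = {}"
  shows "owner M \<phi> p \<noteq> P"
proof -
  have "\<not> var_pos p"
  proof
    assume "var_pos p"
    then obtain v X Q where "p = GP v (Var X) Q"
      by (cases p) (auto simp: var_pos_def)
    with assms(1,3) show False
      using reach_Var(2) by (metis insert_not_empty)
  qed
  moreover have "\<not> binder_pos p"
  proof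
    assume "binder_pos p"
    then obtain v F Q Y where "p = GP v F Q" "binds Y F"
      by (cases p) (auto simp: binder_pos_def)
    with assms(3) show False
      using binder_moves by (metis insert_not_empty)
  qed
  ultimately show ?thesis
    using own_move_wins[OF assms(2)] assms(3) by auto
qed

lemma strat_step:
  assumes "reach p" "wins_under \<kappa> p" "\<not> binder_pos p" "p' \<in> moves M \<phi> p"
    and "owner M \<phi> p = P \<Longrightarrow> p' = strat p"
  shows "winnable p'" "lex_le lt (sig_list (least_sig p')) (sig_list \<kappa>)"
proof -
  have "winnable p' \<and> lex_le lt (sig_list (least_sig p')) (sig_list \<kappa>)"
  proof (cases "var_pos p")
    case True
    then obtain v X Q where p: "p = GP v (Var X) Q"
      by (cases p) (auto simp: var_pos_def)
    then have "p' = GP v (binder_of X) Q"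
      using reach_Var(2)[of v X Q] assms(1,4) by auto
    with assms(1,2) p show ?thesis
      using wins_under_regenerate least_sig(2) by blast
  next
    case False
    show ?thesis
    proof (cases "owner M \<phi> p = P")
      case True
      then obtain p'' where p'': "p'' \<in> moves M \<phi> p" "wins_under \<kappa> p''"
        using own_move_wins[OF assms(2) _ False assms(3)] by blast
      then have "lex_le lt (sig_list (least_sig (strat p))) (sig_list \<kappa>)"
        using strat_least(3)[of p'' p] least_sig(2)[OF p''(2)] lex_le_trans[OF ordinal_less(2)] by blast
      with p'' True show ?thesis
        using strat_least(2) assms(5) by blast
    next
      case False
      then have "wins_under \<kappa> p'"
        using opponent_moves_win assms \<open>\<not> var_pos p\<close> by blast
      then show ?thesis
        using least_sig(2) by blast
    qed
  qed
  then show "winnable p'" "lex_le lt (sig_list (least_sig p')) (sig_list \<kappa>)"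
    by blast+
qed

lemma winnable_step:
  assumes "reach p" "winnable p" "p' \<in> moves M \<phi> p" "owner M \<phi> p = P \<Longrightarrow> p' = strat p"
  shows "winnable p'"
proof (cases "binder_pos p")
  case True
  then obtain v F Q Y where "p = GP v F Q" "binds Y F"
    by (cases p) (auto simp: binder_pos_def)
  with assms show ?thesis
    using wins_under_unfold binder_moves by (metis singletonD)
next
  case False
  with assms show ?thesis
    using strat_step(1) by blast
qed


lemma var_index: "X \<in> vars \<Longrightarrow> \<exists>k < length var_list. var_list ! k = X"
  using var_list(1) by (metis in_set_conv_nth)

lemma var_index_unique: "i < length var_list \<Longrightarrow> j < length var_list \<Longrightarrow> var_list ! i = var_list ! j \<Longrightarrow> i = j"
  using nth_eq_iff_index_eq[OF var_list(2)] by blast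

lemma take_sig_list_Suc:
  "k < length var_list \<Longrightarrow> take (Suc k) (sig_list \<kappa>) = take k (sig_list \<kappa>) @ [\<kappa> (var_list ! k)]"
  unfolding sig_list_def by (simp add: take_Suc_conv_app_nth)

lemma take_sig_list_update:
  "(\<And>j. j < k \<Longrightarrow> j < length var_list \<Longrightarrow> var_list ! j \<noteq> Y) \<Longrightarrow>
    take k (sig_list (\<kappa>(Y := \<beta>))) = take k (sig_list \<kappa>)"
  unfolding sig_list_def by (rule nth_equalityI) auto

lemma agree_outside_if_take_eq:
  assumes "k < length var_list" "var_list ! k = X" "take k (sig_list \<kappa>') = take k (sig_list \<kappa>)"
  shows "agree_outside X \<kappa>' \<kappa>"
proof (intro ballI impI)
  fix Z assume Z: "Z \<in> vars" "size (binder_of X) < size (binder_of Z)"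
  then obtain j where j: "j < length var_list" "var_list ! j = Z"
    using var_index by blast
  then have "j < k"
    using var_list_outer_first[OF j(1) assms(1)] Z(2) assms(2) by simp
  then show "\<kappa>' Z = \<kappa> Z"
    using arg_cong[OF assms(3), of "\<lambda>l. l ! j"] j unfolding sig_list_def by simp
qed



lemma owned_by_I_iff_not_adverse:
  assumes "X \<in> vars" "reach (GP v (binder_of X) Q)"
  shows "owned_by_I M w \<phi> (binder_of X) \<longleftrightarrow> (P = PI \<longleftrightarrow> \<not> adverse X)"
proof -
  have Q: "Q' = Q" if "reach (GP v' (binder_of X) Q')" for v' Q'
    using binder_role_unique[OF assms(1) that assms(2)] .
  obtain g where g: "binder_of X = Mu X g \<or> binder_of X = Nu X g"
    using binder_of(2)[OF assms(1)] by (auto simp: binds_def)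
  then have "owned_by_I M w \<phi> (binder_of X) \<longleftrightarrow>
      (\<exists>v' Q'. reach (GP v' (binder_of X) Q') \<and> (if mu_var X then Q' = Refuter else Q' = Verifier))"
    unfolding owned_by_I_def by auto
  also have "\<dots> \<longleftrightarrow> (if mu_var X then Q = Refuter else Q = Verifier)"
    using assms(2) Q by blast
  finally have "owned_by_I M w \<phi> (binder_of X) \<longleftrightarrow> (if mu_var X then Q = Refuter else Q = Verifier)" .
  moreover have "adverse X \<longleftrightarrow> (if mu_var X then role_of Q = Verifier else role_of Q = Refuter)"
  proof
    assume "adverse X"
    then obtain v' Q' where "reach (GP v' (binder_of X) Q')"
      "if mu_var X then role_of Q' = Verifier else role_of Q' = Refuter"
      unfolding adverse_def by blast
    with Q show "if mu_var X then role_of Q = Verifier else role_of Q = Refuter"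
      by blast
  next
    assume "if mu_var X then role_of Q = Verifier else role_of Q = Refuter"
    with assms show "adverse X"
      unfolding adverse_def by blast
  qed
  ultimately show ?thesis
    unfolding role_of_def by (cases P; cases Q) auto
qed

end

section \<open>Plays following the strategy\<close>

lemma exists_exit:
  "Pr a \<Longrightarrow> \<not> Pr b \<Longrightarrow> a \<le> b \<Longrightarrow> \<exists>k\<ge>a. k < b \<and> Pr k \<and> \<not> Pr (Suc k)"
proof (induction b)
  case (Suc b)
  then show ?case
    by (cases "Pr b") (auto simp: le_Suc_eq intro: less_SucI)
qed simp

locale strat_play = player_game M w \<phi> P for M :: "('w, 'p) ck_struct" and w and \<phi> :: "('p, 'v) fm" and P +
  fixes r :: "nat \<Rightarrow> ('w, 'p, 'v) gpos"
  assumes run: "inf_run M w \<phi> r" and follows: "inf_follows M \<phi> P strat r"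
    and winnable_init: "winnable (r 0)"
begin

lemma play_move: "r (Suc n) \<in> moves M \<phi> (r n)"
  using run unfolding inf_run_def by blast

lemma play_follows: "owner M \<phi> (r n) = P \<Longrightarrow> r (Suc n) = strat (r n)"
  using follows unfolding inf_follows_def by blast

lemma play_reach: "reach (r n)"
proof (induction n)
  case 0
  then show ?case
    using run reach_init unfolding inf_run_def init_pos_def by simp
next
  case (Suc n)
  then show ?case
    using reach_step play_move by blast
qed

lemma play_winnable: "winnable (r n)"
proof (induction n)
  case (Suc n)
  then show ?case
    by (rule winnable_step[OF play_reach _ play_move play_follows])
qed (rule winnable_init)

lemma wins_under_least_sig: "wins_under (least_sig (r n)) (r n)"
  using least_sig(1) play_winnable by blast

lemma least_sig_plain_step:
  "\<not> binder_pos (r n) \<Longrightarrow> lex_le lt (sig_list (least_sig (r (Suc n)))) (sig_list (least_sig (r n)))"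
  by (rule strat_step(2)[OF play_reach wins_under_least_sig _ play_move]) (simp_all add: play_follows)

lemma least_sig_binder_step:
  assumes "r n = GP v F Q" "binds Y F"
  shows "\<exists>\<beta>. lex_le lt (sig_list (least_sig (r (Suc n)))) (sig_list ((least_sig (r n))(Y := \<beta>)))"
proof -
  obtain \<beta> where "wins_under ((least_sig (r n))(Y := \<beta>)) (GP v (body F) Q)"
    using wins_under_unfold[OF _ assms(2)] play_reach wins_under_least_sig assms(1) by metis
  moreover have "r (Suc n) = GP v (body F) Q"
    using play_move[of n] unfolding assms(1) binder_moves[OF assms(2)] by simp
  ultimately show ?thesis
    using least_sig(2) by metis
qed

lemma play_Var:
  assumes "r n = GP v (Var X) Q"
  shows "X \<in> vars" "r (Suc n) = GP v (binder_of X) Q"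
  using reach_Var[of v X Q] play_reach[of n] play_move[of n] assms by auto

definition regen_times :: "'v \<Rightarrow> nat set" where
  "regen_times X = {n. \<exists>v Q. r n = GP v (Var X) Q}"

lemma play_Var_regen_times: "r n = GP v (Var X) Q \<Longrightarrow> n \<in> regen_times X"
  unfolding regen_times_def by blast

lemma infinite_var_positions: "infinite {n. var_pos (r n)}"
proof
  assume "finite {n. var_pos (r n)}"
  then obtain N where N: "\<And>n. var_pos (r n) \<Longrightarrow> n < N"
    by (metis finite_nat_set_iff_bounded mem_Collect_eq)
  have "pos_rank (r (N + k)) + k \<le> pos_rank (r N)" for k
  proof (induction k)
    case (Suc k)
    have "pos_rank (r (Suc (N + k))) < pos_rank (r (N + k))"
      using pos_rank_decreasing[OF play_move] N[of "N + k"] by fastforce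
    with Suc show ?case
      by simp
  qed simp
  from this[of "Suc (pos_rank (r N))"] show False
    by simp
qed

lemma var_positions_eq: "{n. var_pos (r n)} = (\<Union>X\<in>vars. regen_times X)"
proof (intro set_eqI iffI)
  fix n assume "n \<in> {n. var_pos (r n)}"
  then obtain v X Q where "r n = GP v (Var X) Q"
    by (cases "r n") (auto simp: var_pos_def)
  then show "n \<in> (\<Union>X\<in>vars. regen_times X)"
    using play_Var(1)[of n v X Q] play_Var_regen_times[of n v X Q] by blast
qed (auto simp: regen_times_def var_pos_def)

lemma inf_regen_iff: "X \<in> vars \<Longrightarrow> inf_regen r (binder_of X) \<longleftrightarrow> infinite (regen_times X)"
proof -
  assume X: "X \<in> vars"
  have "{n. \<exists>v Y Q. r n = GP v (Var Y) Q \<and> r (Suc n) = GP v (binder_of X) Q} = regen_times X"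
    using play_Var binder_inj[OF _ X] unfolding regen_times_def by fastforce
  then show ?thesis
    unfolding inf_regen_def by simp
qed

lemma inf_regen_binder:
  assumes "inf_regen r F"
  shows "\<exists>X\<in>vars. F = binder_of X"
proof -
  have "{n. \<exists>v X Q. r n = GP v (Var X) Q \<and> r (Suc n) = GP v F Q} \<noteq> {}"
    using assms unfolding inf_regen_def by (metis finite.emptyI)
  then obtain n v X Q where "r n = GP v (Var X) Q" "r (Suc n) = GP v F Q"
    by blast
  then show ?thesis
    using play_Var[of n v X Q] by auto
qed

definition inf_vars :: "'v set" where
  "inf_vars = {X \<in> vars. infinite (regen_times X)}"

lemma inf_regen_iff_inf_vars: "inf_regen r F \<longleftrightarrow> (\<exists>Y\<in>inf_vars. F = binder_of Y)"
  using inf_regen_binder inf_regen_iff unfolding inf_vars_def by blast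

lemma finite_inf_vars: "finite inf_vars"
  using finite_vars unfolding inf_vars_def by simp

lemma inf_vars_nonempty: "inf_vars \<noteq> {}"
proof
  assume "inf_vars = {}"
  then have "finite (\<Union>X\<in>vars. regen_times X)"
    using finite_vars unfolding inf_vars_def by blast
  then show False
    using infinite_var_positions var_positions_eq by simp
qed


lemma exit_through_Var:
  assumes "F \<in> Sub \<phi>" "pos_fm (r k) \<in> Sub F" "pos_fm (r (Suc k)) \<notin> Sub F"
  shows "\<exists>v Z Q. r k = GP v (Var Z) Q \<and> size F < size (binder_of Z)"
proof (cases "var_pos (r k)")
  case True
  then obtain v Z Q where rk: "r k = GP v (Var Z) Q"
    by (cases "r k") (auto simp: var_pos_def)
  with assms have "size F < size (binder_of Z)"
    using play_Var[OF rk] size_less_binder_if_not_Sub by auto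
  with rk show ?thesis
    by blast
next
  case False
  then have "pos_fm (r (Suc k)) \<in> Sub (pos_fm (r k))"
    using moves_Sub play_move by blast
  with assms show ?thesis
    using Sub_trans by blast
qed

lemma outer_inf_var_if_not_nested:
  assumes X: "X \<in> inf_vars" and Y: "Y \<in> inf_vars" "binder_of Y \<notin> Sub (binder_of X)"
  shows "\<exists>Z\<in>inf_vars. size (binder_of X) < size (binder_of Z)"
proof -
  let ?F = "binder_of X"
  let ?E = "{k. \<exists>v Z Q. r k = GP v (Var Z) Q \<and> size ?F < size (binder_of Z)}"
  have F: "?F \<in> Sub \<phi>"
    using X binder_of(1) unfolding inf_vars_def by blast
  have "\<exists>k\<ge>m. k \<in> ?E" for m
  proof -
    obtain n v Q where n: "n \<ge> m" "r n = GP v (Var X) Q"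
      using X unfolding inf_vars_def regen_times_def infinite_nat_iff_unbounded_le by blast
    obtain n' v' Q' where n': "n' \<ge> Suc n" "r n' = GP v' (Var Y) Q'"
      using Y unfolding inf_vars_def regen_times_def infinite_nat_iff_unbounded_le by blast
    have "pos_fm (r (Suc n)) \<in> Sub ?F" "pos_fm (r (Suc n')) \<notin> Sub ?F" "Suc n \<le> Suc n'"
      using play_Var(2)[OF n(2)] play_Var(2)[OF n'(2)] Y(2) n'(1) by simp_all
    then obtain k where k: "k \<ge> Suc n" "pos_fm (r k) \<in> Sub ?F" "pos_fm (r (Suc k)) \<notin> Sub ?F"
      using exists_exit[of "\<lambda>k. pos_fm (r k) \<in> Sub ?F" "Suc n" "Suc n'"] by blast
    then have "k \<in> ?E"
      using exit_through_Var[OF F] by blast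
    with k(1) n(1) show ?thesis
      by (intro exI[of _ k]) simp
  qed
  then have "infinite ?E"
    using infinite_nat_iff_unbounded_le by blast
  moreover have "?E \<subseteq> (\<Union>Z\<in>{Z \<in> vars. size ?F < size (binder_of Z)}. regen_times Z)"
  proof
    fix k assume "k \<in> ?E"
    then obtain v Z Q where "r k = GP v (Var Z) Q" "size ?F < size (binder_of Z)"
      by blast
    then show "k \<in> (\<Union>Z\<in>{Z \<in> vars. size ?F < size (binder_of Z)}. regen_times Z)"
      using play_Var(1)[of k v Z Q] play_Var_regen_times[of k v Z Q] by blast
  qed
  ultimately have "infinite (\<Union>Z\<in>{Z \<in> vars. size ?F < size (binder_of Z)}. regen_times Z)"
    using finite_subset by blast
  moreover have "finite {Z \<in> vars. size ?F < size (binder_of Z)}"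
    using finite_vars by simp
  ultimately obtain Z where "Z \<in> vars" "size ?F < size (binder_of Z)" "infinite (regen_times Z)"
    using finite_UN_I[of _ regen_times] by blast
  then show ?thesis
    unfolding inf_vars_def by blast
qed

lemma outermost_inf_var: "\<exists>X\<in>inf_vars. \<forall>Y\<in>inf_vars. binder_of Y \<in> Sub (binder_of X)"
proof -
  let ?m = "Max ((\<lambda>Y. size (binder_of Y)) ` inf_vars)"
  have "?m \<in> (\<lambda>Y. size (binder_of Y)) ` inf_vars"
    by (rule Max_in) (use finite_inf_vars inf_vars_nonempty in auto)
  then obtain X where X: "X \<in> inf_vars" "size (binder_of X) = ?m"
    by auto
  have "size (binder_of Z) \<le> ?m" if "Z \<in> inf_vars" for Z
    using finite_inf_vars that by simp
  with X have "binder_of Y \<in> Sub (binder_of X)" if "Y \<in> inf_vars" for Y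
    using outer_inf_var_if_not_nested[OF X(1) that] by force
  with X(1) show ?thesis
    by blast
qed

end

locale adverse_outermost = strat_play M w \<phi> P r
  for M :: "('w, 'p) ck_struct" and w and \<phi> :: "('p, 'v) fm" and P r +
  fixes X :: 'v
  assumes X_inf: "X \<in> inf_vars"
    and outermost: "\<And>Y. Y \<in> inf_vars \<Longrightarrow> binder_of Y \<in> Sub (binder_of X)"
    and X_adverse: "adverse X"
begin

lemma X_vars: "X \<in> vars"
  using X_inf unfolding inf_vars_def by blast

lemma eventually_inside:
  "\<exists>n0. n0 \<in> regen_times X \<and> (\<forall>t\<ge>n0. pos_fm (r t) \<in> Sub (binder_of X))"
proof -
  have "finite (\<Union>Z\<in>vars - inf_vars. regen_times Z)"
    using finite_vars unfolding inf_vars_def by auto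
  then obtain N where N: "\<And>n Z. Z \<in> vars - inf_vars \<Longrightarrow> n \<in> regen_times Z \<Longrightarrow> n \<le> N"
    unfolding finite_nat_set_iff_bounded_le by blast
  obtain n0 where n0: "n0 \<ge> Suc N" "n0 \<in> regen_times X"
    using X_inf unfolding inf_vars_def infinite_nat_iff_unbounded_le by blast
  have "pos_fm (r (n0 + d)) \<in> Sub (binder_of X)" for d
  proof (induction d)
    case 0
    obtain v Q where "r n0 = GP v (Var X) Q"
      using n0(2) unfolding regen_times_def by blast
    then show ?case
      using binder_of(3)[OF X_vars] Sub_trans[OF _ body_Sub[OF binder_of(2)[OF X_vars]]] by simp
  next
    case (Suc d)
    show ?case
    proof (cases "var_pos (r (n0 + d))")
      case True
      then obtain v Z Q where rZ: "r (n0 + d) = GP v (Var Z) Q"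
        by (cases "r (n0 + d)") (auto simp: var_pos_def)
      then have "Z \<in> inf_vars"
        using N[of Z "n0 + d"] n0(1) play_Var(1)[OF rZ] play_Var_regen_times[OF rZ] by fastforce
      then show ?thesis
        using outermost play_Var(2)[OF rZ] by simp
    next
      case False
      then show ?thesis
        using Suc moves_Sub[OF play_move] Sub_trans by fastforce
    qed
  qed
  then have "pos_fm (r t) \<in> Sub (binder_of X)" if "t \<ge> n0" for t
    using that by (metis le_add_diff_inverse)
  with n0(2) show ?thesis
    by blast
qed

end

text \<open>From time \<open>n0\<close> on the play stays below the binder of \<open>X\<close>; the ordinals of \<open>X\<close> and the outer
  variables then never increase, and strictly decrease along each cycle through \<open>X\<close>.\<close>

locale adverse_tail = adverse_outermost M w \<phi> P r X
  for M :: "('w, 'p) ck_struct" and w and \<phi> :: "('p, 'v) fm" and P r X +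
  fixes n0 :: nat
  assumes n0_regen: "n0 \<in> regen_times X"
    and inside: "\<And>t. n0 \<le> t \<Longrightarrow> pos_fm (r t) \<in> Sub (binder_of X)"
begin

definition idx :: nat where
  "idx = (SOME k. k < length var_list \<and> var_list ! k = X)"

lemma idx: "idx < length var_list" "var_list ! idx = X"
  using someI_ex[OF var_index[OF X_vars]] unfolding idx_def[symmetric] by blast+

definition outer_sig :: "nat \<Rightarrow> 'w set set list" where
  "outer_sig t = take (Suc idx) (sig_list (least_sig (r t)))"

definition below :: "nat \<Rightarrow> bool" where
  "below t \<longleftrightarrow> n0 \<le> t \<and> pos_fm (r t) \<noteq> binder_of X"

lemma length_outer_sig: "length (outer_sig t) = Suc idx"
  unfolding outer_sig_def using idx(1) by simp

lemma below_Var: "n0 \<le> t \<Longrightarrow> r t = GP v (Var X) Q \<Longrightarrow> below t"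
  unfolding below_def using binder_of(2)[OF X_vars] by (metis binds_simps(3) pos_fm.simps(1))

lemma leave_binder: "pos_fm (r t) = binder_of X \<Longrightarrow> pos_fm (r (Suc t)) \<noteq> binder_of X"
  using moves_from_binder[OF binder_of(2)[OF X_vars] _ play_move] size_body[OF binder_of(2)[OF X_vars]]
  by fastforce

lemma enter_binder:
  assumes "n0 \<le> t" "pos_fm (r t) \<noteq> binder_of X" "pos_fm (r (Suc t)) = binder_of X"
  shows "\<exists>v Q. r t = GP v (Var X) Q"
proof (cases "var_pos (r t)")
  case True
  then obtain v Z Q where rZ: "r t = GP v (Var Z) Q"
    by (cases "r t") (auto simp: var_pos_def)
  then have "Z = X"
    using play_Var[OF rZ] assms(3) binder_inj[OF _ X_vars] by simp
  with rZ show ?thesis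
    by blast
next
  case False
  then have "binder_of X \<in> Sub (pos_fm (r t))"
    using moves_Sub[OF play_move] assms(3) by metis
  then show ?thesis
    using Sub_antisym inside[OF assms(1)] assms(2) by blast
qed

lemma outer_sig_mono:
  assumes "below t"
  shows "lex_le lt (outer_sig (Suc t)) (outer_sig t)"
proof (cases "binder_pos (r t)")
  case False
  then show ?thesis
    unfolding outer_sig_def using lex_le_take least_sig_plain_step by blast
next
  case True
  then obtain v G Q Y where rt: "r t = GP v G Q" "binds Y G"
    by (cases "r t") (auto simp: binder_pos_def)
  then obtain \<beta> where \<beta>: "lex_le lt (sig_list (least_sig (r (Suc t)))) (sig_list ((least_sig (r t))(Y := \<beta>)))"
    using least_sig_binder_step by blast
  have G: "G \<in> Sub (binder_of X)" "G \<noteq> binder_of X"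
    using inside[of t] assms rt(1) unfolding below_def by auto
  have "var_list ! j \<noteq> Y" if "j < Suc idx" "j < length var_list" for j
  proof (cases "Y \<in> vars")
    case True
    then have "binder_of Y = G"
      using binder_eqI rt(2) Sub_trans[OF G(1) binder_of(1)[OF X_vars]] by blast
    then have "size (binder_of Y) < size (binder_of X)"
      using size_less_if_Sub G by simp
    show ?thesis
    proof
      assume "var_list ! j = Y"
      then have "idx < j"
        using var_list_outer_first[OF idx(1) that(2)] \<open>size (binder_of Y) < size (binder_of X)\<close> idx(2)
        by simp
      with that(1) show False
        by simp
    qed
  next
    case False
    then show ?thesis
      using that var_list(1) nth_mem by fastforce
  qed
  then have "take (Suc idx) (sig_list ((least_sig (r t))(Y := \<beta>))) = outer_sig t"
    unfolding outer_sig_def by (rule take_sig_list_update)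
  then show ?thesis
    using lex_le_take[OF \<beta>, of "Suc idx"] unfolding outer_sig_def by simp
qed

lemma take_sig_list_update_X:
  "take (Suc idx) (sig_list (\<kappa>(X := \<gamma>))) = take idx (sig_list \<kappa>) @ [\<gamma>]"
proof -
  have "var_list ! j \<noteq> X" if "j < idx" "j < length var_list" for j
    using that idx var_index_unique[of j idx] by auto
  then show ?thesis
    using take_sig_list_Suc[OF idx(1), of "\<kappa>(X := \<gamma>)"] take_sig_list_update idx(2) by simp
qed

lemma outer_sig_split: "outer_sig t = take idx (sig_list (least_sig (r t))) @ [least_sig (r t) X]"
  unfolding outer_sig_def using take_sig_list_Suc[OF idx(1)] idx(2) by simp

lemma cycle_positions:
  assumes "r t = GP v (Var X) Q"
  shows "r (Suc t) = GP v (binder_of X) Q" "r (Suc (Suc t)) = GP v (body (binder_of X)) Q"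
proof -
  show r1: "r (Suc t) = GP v (binder_of X) Q"
    using play_Var(2)[OF assms] .
  show "r (Suc (Suc t)) = GP v (body (binder_of X)) Q"
    using play_move[of "Suc t"] unfolding r1 binder_moves[OF binder_of(2)[OF X_vars]] by simp
qed

lemma below_after_cycle: "n0 \<le> t \<Longrightarrow> r t = GP v (Var X) Q \<Longrightarrow> below (Suc (Suc t))"
  unfolding below_def using cycle_positions(2) size_body[OF binder_of(2)[OF X_vars]] by auto

lemma outer_sig_cycle:
  assumes "r t = GP v (Var X) Q"
  shows "lex_less lt (outer_sig (Suc (Suc t))) (outer_sig t)"
proof -
  let ?\<kappa> = "least_sig (r t)" and ?\<kappa>1 = "least_sig (r (Suc t))"
  have "lex_le lt (sig_list ?\<kappa>1) (sig_list ?\<kappa>)"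
    using least_sig_plain_step[of t] assms by (simp add: binder_pos_def)
  then consider "take idx (sig_list ?\<kappa>1) = take idx (sig_list ?\<kappa>)"
    | "lex_less lt (take idx (sig_list ?\<kappa>1)) (take idx (sig_list ?\<kappa>))"
    unfolding lex_le_def using lex_le_take[unfolded lex_le_def] by blast
  then show ?thesis
  proof cases
    case 1
    obtain \<beta> where \<beta>: "(\<beta>, ?\<kappa> X) \<in> lt"
      "\<And>\<kappa>'. agree_outside X \<kappa>' ?\<kappa> \<Longrightarrow> wins_under (\<kappa>'(X := \<beta>)) (GP v (body (binder_of X)) Q)"
      using wins_under_adverse_cycle[OF _ X_adverse] play_reach[of t] wins_under_least_sig[of t] assms
      by force
    have "wins_under (?\<kappa>1(X := \<beta>)) (r (Suc (Suc t)))"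
      using \<beta>(2) agree_outside_if_take_eq[OF idx 1] cycle_positions(2)[OF assms] by simp
    then have "lex_le lt (outer_sig (Suc (Suc t))) (take idx (sig_list ?\<kappa>1) @ [\<beta>])"
      unfolding outer_sig_def using lex_le_take least_sig(2) take_sig_list_update_X by metis
    moreover have "lex_less lt (take idx (sig_list ?\<kappa>1) @ [\<beta>]) (outer_sig t)"
      unfolding outer_sig_split 1 by (rule lex_less_snoc[OF \<beta>(1)])
    ultimately show ?thesis
      by (rule lex_le_less_trans[OF ordinal_less(2)])
  next
    case 2
    obtain \<beta> where "lex_le lt (sig_list (least_sig (r (Suc (Suc t))))) (sig_list (?\<kappa>1(X := \<beta>)))"
      using least_sig_binder_step[OF cycle_positions(1)[OF assms] binder_of(2)[OF X_vars]] by blast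
    then have "lex_le lt (outer_sig (Suc (Suc t))) (take idx (sig_list ?\<kappa>1) @ [\<beta>])"
      unfolding outer_sig_def using lex_le_take take_sig_list_update_X by metis
    moreover have "lex_less lt (take idx (sig_list ?\<kappa>1) @ [\<beta>]) (outer_sig t)"
      unfolding outer_sig_split by (rule lex_less_append_snoc[OF 2]) (simp add: idx(1) less_imp_le_nat)
    ultimately show ?thesis
      by (rule lex_le_less_trans[OF ordinal_less(2)])
  qed
qed

lemma outer_sig_chain:
  assumes "below t" "below m" "t \<le> m"
  shows "lex_le lt (outer_sig m) (outer_sig t)"
  using assms(2,3)
proof (induction m rule: less_induct)
  case (less m)
  show ?case
  proof (cases "m = t")
    case False
    then obtain m1 where m1: "m = Suc m1" "t \<le> m1"
      using less.prems(2) by (cases m) auto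
    show ?thesis
    proof (cases "pos_fm (r m1) = binder_of X")
      case False
      then have "below m1"
        using m1(2) assms(1) unfolding below_def by simp
      then show ?thesis
        using outer_sig_mono less.IH[of m1] m1 lex_le_trans[OF ordinal_less(2)] by blast
    next
      case True
      then have "m1 \<noteq> t"
        using assms(1) unfolding below_def by auto
      then obtain m2 where m2: "m1 = Suc m2" "t \<le> m2"
        using m1(2) by (cases m1) auto
      then have "below m2" "pos_fm (r (Suc m2)) = binder_of X"
        using leave_binder[of m2] True assms(1) unfolding below_def by auto
      then obtain v Q where "r m2 = GP v (Var X) Q"
        using enter_binder unfolding below_def by blast
      then have "lex_less lt (outer_sig m) (outer_sig m2)"
        using outer_sig_cycle m1(1) m2(1) by blast
      then show ?thesis
        using less.IH[of m2] m1 m2 \<open>below m2\<close> lex_less_le_trans[OF ordinal_less(2)]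
        unfolding lex_le_def by auto
    qed
  qed (simp add: lex_le_def)
qed

lemma impossible: False
proof -
  let ?S = "{outer_sig t | t. below t}"
  have "below n0"
    using n0_regen below_Var unfolding regen_times_def by blast
  then have "outer_sig n0 \<in> ?S"
    by blast
  from wf_eq_minimal[THEN iffD1, OF wf_lex_less[OF ordinal_less(1), of "Suc idx"], rule_format, OF this]
  obtain t1 where t1: "below t1"
    "\<And>y. (y, outer_sig t1) \<in> {(as, bs). length as = Suc idx \<and> length bs = Suc idx \<and> lex_less lt as bs} \<Longrightarrow>
       y \<notin> ?S"
    by blast
  have minimal: "\<not> lex_less lt (outer_sig t) (outer_sig t1)" if "below t" for t
    using t1(2)[of "outer_sig t"] that length_outer_sig by blast
  obtain n v Q where n: "n \<ge> t1" "r n = GP v (Var X) Q"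
    using X_inf unfolding inf_vars_def regen_times_def infinite_nat_iff_unbounded_le by blast
  then have "below n"
    using t1(1) below_Var[of n v Q] unfolding below_def by linarith
  then have "lex_less lt (outer_sig (Suc (Suc n))) (outer_sig t1)"
    using outer_sig_cycle[OF n(2)] outer_sig_chain[OF t1(1) _ n(1)] lex_less_le_trans[OF ordinal_less(2)]
    by blast
  moreover have "below (Suc (Suc n))"
    using below_after_cycle[OF _ n(2)] \<open>below n\<close> unfolding below_def by blast
  ultimately show False
    using minimal by blast
qed

end

context adverse_outermost
begin

lemma impossible: False
proof -
  obtain n0 where "n0 \<in> regen_times X" "\<And>t. n0 \<le> t \<Longrightarrow> pos_fm (r t) \<in> Sub (binder_of X)"
    using eventually_inside by blast
  then interpret adverse_tail M w \<phi> P r X n0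
    by unfold_locales
  show False
    by (rule impossible)
qed

end

context strat_play
begin

lemma inf_winner: "inf_winner M w \<phi> r = P"
proof -
  obtain X where X: "X \<in> inf_vars" "\<And>Y. Y \<in> inf_vars \<Longrightarrow> binder_of Y \<in> Sub (binder_of X)"
    using outermost_inf_var by blast
  have "\<not> adverse X"
  proof
    assume "adverse X"
    with X interpret adverse_outermost M w \<phi> P r X
      by unfold_locales
    show False
      by (rule impossible)
  qed
  have outer: "inf_regen r (binder_of X)" "\<And>G. inf_regen r G \<Longrightarrow> G \<in> Sub (binder_of X)"
    using X inf_regen_iff_inf_vars by auto
  then have outermost_iff: "(inf_regen r F \<and> (\<forall>G. inf_regen r G \<longrightarrow> G \<in> Sub F)) \<longleftrightarrow> F = binder_of X" for F
    using Sub_antisym by blast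
  obtain n v Q where "r n = GP v (Var X) Q"
    using X(1) unfolding inf_vars_def regen_times_def by (auto dest: not_finite_existsD)
  then have "X \<in> vars" "reach (GP v (binder_of X) Q)"
    using play_Var play_reach[of "Suc n"] by auto
  then have "owned_by_I M w \<phi> (binder_of X) \<longleftrightarrow> P = PI"
    using owned_by_I_iff_not_adverse \<open>\<not> adverse X\<close> by blast
  moreover have "(\<exists>F. inf_regen r F \<and> (\<forall>G. inf_regen r G \<longrightarrow> G \<in> Sub F) \<and> owned_by_I M w \<phi> F) \<longleftrightarrow>
      owned_by_I M w \<phi> (binder_of X)"
    by (simp only: conj_assoc[symmetric] outermost_iff) simp
  ultimately show ?thesis
    unfolding inf_winner_def by (cases P) auto
qed

end

section \<open>Winning strategies\<close>

context player_game
begin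

lemma fin_winner:
  assumes "fin_run M w \<phi> ps" "fin_follows M \<phi> P strat ps" "winnable (init_pos w \<phi>)"
  shows "fin_winner M \<phi> ps = P"
proof -
  have ps: "ps \<noteq> []" "ps ! 0 = init_pos w \<phi>" "\<And>i. Suc i < length ps \<Longrightarrow> ps ! Suc i \<in> moves M \<phi> (ps ! i)"
    "moves M \<phi> (last ps) = {}"
    using assms(1) unfolding fin_run_def by (auto simp: hd_conv_nth)
  have "reach (ps ! i) \<and> winnable (ps ! i)" if "i < length ps" for i
    using that
  proof (induction i)
    case 0
    then show ?case
      using ps(2) assms(3) reach_init unfolding init_pos_def by simp
  next
    case (Suc i)
    moreover have "owner M \<phi> (ps ! i) = P \<Longrightarrow> ps ! Suc i = strat (ps ! i)"
      using assms(2) Suc.prems unfolding fin_follows_def by blast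
    ultimately show ?case
      using reach_step ps(3) winnable_step by (metis Suc_lessD)
  qed
  then have "reach (last ps)" "winnable (last ps)"
    using ps(1) last_conv_nth[OF ps(1)] by auto
  then have "owner M \<phi> (last ps) \<noteq> P"
    using dead_end_lost ps(4) by blast
  then show ?thesis
    unfolding fin_winner_def by (cases P; cases "owner M \<phi> (last ps)") auto
qed

lemma strat_winning:
  assumes "winnable (init_pos w \<phi>)"
  shows "winning_strategy M w \<phi> P strat"
proof -
  have "inf_winner M w \<phi> r = P" if "inf_run M w \<phi> r" "inf_follows M \<phi> P strat r" for r
  proof -
    from that assms interpret strat_play M w \<phi> P r
      by unfold_locales (auto simp: inf_run_def)
    show ?thesis
      by (rule inf_winner)
  qed
  then show ?thesis
    unfolding winning_strategy_def using strategy_strat fin_winner assms by blast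
qed

lemma winnable_init_iff: "winnable (init_pos w \<phi>) \<longleftrightarrow> (P = PI \<longleftrightarrow> sat M w \<phi>)"
proof -
  have "sem M (sig_env \<kappa>) \<phi> = sem M (\<lambda>_. {}) \<phi>" for \<kappa>
    by (rule sem_cong) (simp add: free_vars_empty)
  then have "wins_under \<kappa> (init_pos w \<phi>) \<longleftrightarrow> (P = PI \<longleftrightarrow> sat M w \<phi>)" for \<kappa>
    using world unfolding init_pos_def sat_def by (simp add: role_of_def)
  then show ?thesis
    by blast
qed

end

theorem mainTheorem4:
  fixes M :: "('w, 'p) ck_struct" and w :: 'w and \<phi> :: "('p, 'v) fm"
  assumes "ck_model M" and "w \<in> mW M"
    and "mu_formula \<phi>" and "sentence \<phi>" and "well_named \<phi>"
  shows "(has_winning_strategy M w \<phi> PI \<longleftrightarrow> sat M w \<phi>) \<and>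
         (has_winning_strategy M w \<phi> PII \<longleftrightarrow> \<not> sat M w \<phi>)"
proof -
  interpret I: player_game M w \<phi> PI
    using assms by unfold_locales (auto simp: well_named_def)
  interpret II: player_game M w \<phi> PII
    by unfold_locales
  have "sat M w \<phi> \<Longrightarrow> has_winning_strategy M w \<phi> PI"
    using I.strat_winning I.winnable_init_iff unfolding has_winning_strategy_def by blast
  moreover have "\<not> sat M w \<phi> \<Longrightarrow> has_winning_strategy M w \<phi> PII"
    using II.strat_winning II.winnable_init_iff unfolding has_winning_strategy_def by blast
  moreover have "\<not> (has_winning_strategy M w \<phi> PI \<and> has_winning_strategy M w \<phi> PII)"
    unfolding has_winning_strategy_def using not_both_winning by (metis (full_types))
  ultimately show ?thesis
    by blast
qed

end
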